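(* Assume conditions (A), (B), (C). Fix $T>0$, let $\delta_k>0$ with $\delta_k\to0$, and for each $k$ let $\tau_k$ be a stopping time (with respect to the filtration generated by $(Y_k(t))_{t\ge0}$) with $0\le\tau_k<\tau_k+\delta_k\le T$. Then for every $\lambda>0$, $$\lim_{k\to\infty}\mathbf{E}\big[\rho_\lambda^2\big(Y_k(\tau_k+\delta_k),Y_k(\tau_k)\big)\big]=0,\qquad\text{where }\rho_\lambda(x,y)=|e^{-\lambda x}-e^{-\lambda y}|.$$
   Context: Model: for each $k\ge1$, let $\{\xi^{(k)}_{n,i}:n\ge0,i\ge1\}$ be i.i.d. $\mathbb{N}$-valued random variables with probability generating function $g_k$. For each $k$ and $n\ge0$ let $\{\psi^{(n)}_k(i):i\ge0\}$ be an $\mathbb{N}$-valued random function with $\psi^{(n)}_k(i)$ having probability generating function $h_k^{(i)}$; these random functions are i.i.d. in $n$ and independent of the offspring; $Z_k(0)$ is $\mathbb{N}$-valued and independent of everything else. $\phi_k^{(n)}(i)=i+\psi_k^{(n)}(i)$, $Z_k(n+1)=\sum_{i=1}^{\phi_k^{(n)}(Z_k(n))}\xi^{(k)}_{n,i}$. $\gamma_k$ positive constants increasing to $\infty$; rescaled process $Y_k(t)=Z_k(\lfloor\gamma_kt\rfloor)/k$, $t\ge0$. Parameters: $b\in\mathbb{R}$, $c\ge0$, $m$ a measure on $(0,\infty)$ with $\int(z\wedge z^2)m(dz)<\infty$, $\pi$ $\sigma$-finite on $(0,\infty)$, Borel $\beta\ge0$, $q\ge0$ satisfying (S1) $|\beta(x)|+\int_0^\infty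 q(x,z)z\pi(dz)\le K(1+x)$ and (S2) $|\beta(x)-\beta(y)|+\int_0^\infty|q(x,z)-q(y,z)|z\pi(dz)\le r(|x-y|)$ for a non-decreasing concave $r\ge0$ with $\int_{0+}r^{-1}=\infty$. $R(\lambda)=b\lambda+c\lambda^2+\int_0^\infty(e^{-\lambda z}-1+\lambda z)m(dz)$, $F(\lambda,x)=-\beta(x)\lambda+\int_0^\infty(e^{-\lambda z}-1)q(x,z)\pi(dz)$, $R_k(\lambda)=k\gamma_k[g_k(1-\lambda/k)-(1-\lambda/k)]$, $F_k(\lambda,x)=\gamma_k[h_k^{(\lfloor kx\rfloor)}(1-\lambda/k)-(1-\lambda/k)]$ for $0\le\lambda\le k$. Conditions: (A) $(R_k)$ uniformly Lipschitz on bounded intervals and $R_k\to R$; (B) $F_k\to F$ uniformly on $[0,a_1]\times[0,a_2]$ for all $a_1,a_2>0$; (C) $\frac{\gamma_k}{k}(h_k^{(\lfloor kx\rfloor)})'(1-)\le K_1(1+x)$ for some $K_1>0$, all $x\ge0,k\ge1$. *)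

theory Defs
  imports "HOL-Probability.Probability"
begin

definition pgf :: "'a measure \<Rightarrow> ('a \<Rightarrow> nat) \<Rightarrow> real \<Rightarrow> real" where
  "pgf M X s = (\<integral>\<omega>. s ^ X \<omega> \<partial>M)"

fun Zproc :: "(nat \<Rightarrow> nat \<Rightarrow> 'a \<Rightarrow> nat) \<Rightarrow> (nat \<Rightarrow> 'a \<Rightarrow> nat \<Rightarrow> nat) \<Rightarrow> ('a \<Rightarrow> nat)
               \<Rightarrow> nat \<Rightarrow> 'a \<Rightarrow> nat" where
  "Zproc xi psi Z0 0 \<omega> = Z0 \<omega>"
| "Zproc xi psi Z0 (Suc n) \<omega> =
     (\<Sum>i\<in>{1..Zproc xi psi Z0 n \<omega> + psi n \<omega> (Zproc xi psi Z0 n \<omega>)}. xi n i \<omega>)"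

definition Yproc :: "nat \<Rightarrow> real \<Rightarrow> (nat \<Rightarrow> 'a \<Rightarrow> nat) \<Rightarrow> real \<Rightarrow> 'a \<Rightarrow> real" where
  "Yproc k gam Z t \<omega> = real (Z (nat \<lfloor>gam * t\<rfloor>) \<omega>) / real k"

definition nat_filtration :: "'a measure \<Rightarrow> (real \<Rightarrow> 'a \<Rightarrow> real) \<Rightarrow> real \<Rightarrow> 'a measure" where
  "nat_filtration M Y t =
     sigma (space M) {Y s -` A \<inter> space M | s A. 0 \<le> s \<and> s \<le> t \<and> A \<in> sets borel}"

text \<open>Index set for the joint independence of all the driving randomness.\<close>
datatype src = Off nat nat | Imm nat | Init

definition rho :: "real \<Rightarrow> real \<Rightarrow> real \<Rightarrow> real" where
  "rho lam x y = \<bar>exp (- lam * x) - exp (- lam * y)\<bar>"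

definition Rfun :: "real \<Rightarrow> real \<Rightarrow> real measure \<Rightarrow> real \<Rightarrow> real" where
  "Rfun b c m lam = b * lam + c * lam^2 + (\<integral>z. exp (- lam * z) - 1 + lam * z \<partial>m)"

definition Ffun :: "(real \<Rightarrow> real) \<Rightarrow> (real \<Rightarrow> real \<Rightarrow> real) \<Rightarrow> real measure \<Rightarrow> real \<Rightarrow> real \<Rightarrow> real" where
  "Ffun \<beta> q \<pi> lam x = - \<beta> x * lam + (\<integral>z. (exp (- lam * z) - 1) * q x z \<partial>\<pi>)"

definition Rk :: "(real \<Rightarrow> real) \<Rightarrow> nat \<Rightarrow> real \<Rightarrow> real \<Rightarrow> real" where
  "Rk g k gam lam = real k * gam * (g (1 - lam / real k) - (1 - lam / real k))"

definition Fk :: "(nat \<Rightarrow> real \<Rightarrow> real) \<Rightarrow> nat \<Rightarrow> real \<Rightarrow> real \<Rightarrow> real \<Rightarrow> real" where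
  "Fk h k gam lam x = gam * (h (nat \<lfloor>real k * x\<rfloor>) (1 - lam / real k) - (1 - lam / real k))"

end

theory Submission
  imports Defs
begin

text \<open>
  Put \<open>s = exp (-\<lambda>/k)\<close>, \<open>\<sigma> = \<lfloor>\<gamma>_k \<tau>\<rfloor>\<close> and \<open>N = \<lfloor>\<gamma>_k (\<tau> + \<delta>)\<rfloor>\<close>. Then
  \<open>\<rho>_\<lambda>(Y_k(\<tau> + \<delta>), Y_k(\<tau>))^2 = (s^Z(N) - s^Z(\<sigma>))^2\<close>, and \<open>\<sigma>\<close>, \<open>N\<close> are stopping indices for the
  filtration generated by the driving variables of the first generations. Writing
  \<open>(y - x)^2 = (y^2 - x^2) - 2x(y - x)\<close> and telescoping over the window \<open>\<sigma> \<le> m < N\<close> reduces the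
  expectation to a sum of one-step terms \<open>E[W (s^Z(m+1) - s^Z(m))]\<close> with \<open>W\<close> determined by the first
  \<open>m\<close> generations. By independence, the conditional expectation of \<open>s^Z(m+1)\<close> given \<open>Z(m) = z\<close> is
  \<open>g_k(s)^z h_k^(z)(g_k(s))\<close>; the Lipschitz bound in (A) and condition (C) show that it differs from
  \<open>s^z\<close> by \<open>O(1/\<gamma>_k)\<close> uniformly in \<open>z\<close>. As the window has at most \<open>\<gamma>_k \<delta>_k + 1\<close> steps,
  the expectation is \<open>O(\<delta>_k + 1/\<gamma>_k)\<close>.
\<close>

section \<open>Elementary estimates\<close>

lemma abs_power_Suc_diff_le:
  fixes x y b :: real
  assumes "0 \<le> x" "x \<le> b" "0 \<le> y" "y \<le> b"
  shows "\<bar>x ^ Suc n - y ^ Suc n\<bar> \<le> real (Suc n) * b ^ n * \<bar>x - y\<bar>"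
proof (induction n)
  case 0
  then show ?case by simp
next
  case (Suc n)
  have "x ^ Suc (Suc n) - y ^ Suc (Suc n) = x * (x ^ Suc n - y ^ Suc n) + y ^ Suc n * (x - y)"
    by (simp add: algebra_simps)
  then have "\<bar>x ^ Suc (Suc n) - y ^ Suc (Suc n)\<bar> \<le> \<bar>x * (x ^ Suc n - y ^ Suc n)\<bar> + \<bar>y ^ Suc n * (x - y)\<bar>"
    by (metis abs_triangle_ineq)
  also have "\<dots> = x * \<bar>x ^ Suc n - y ^ Suc n\<bar> + y ^ Suc n * \<bar>x - y\<bar>"
    using assms by (simp add: abs_mult)
  also have "\<dots> \<le> b * (real (Suc n) * b ^ n * \<bar>x - y\<bar>) + b ^ Suc n * \<bar>x - y\<bar>"
    using assms by (intro add_mono mult_mono Suc.IH power_mono) auto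
  also have "\<dots> = real (Suc (Suc n)) * b ^ Suc n * \<bar>x - y\<bar>"
    by (simp add: algebra_simps)
  finally show ?case .
qed

lemma mult_exp_neg_le_1: "t * exp (- t) \<le> (1::real)"
proof -
  have "t \<le> exp t"
    using exp_ge_add_one_self[of t] by linarith
  then have "t * exp (- t) \<le> exp t * exp (- t)"
    by (intro mult_right_mono) auto
  then show ?thesis
    by (simp add: exp_minus_inverse)
qed

lemma exp_neg_le_1_minus_half:
  assumes "0 \<le> x" "x \<le> 1"
  shows "exp (- x) \<le> 1 - x / (2::real)"
proof -
  have "exp (- x) \<le> 1 / (1 + x)"
    using assms exp_ge_add_one_self[of x] by (simp add: exp_minus field_simps)
  also have "\<dots> \<le> 1 - x / 2"
    using assms mult_left_le_one_le[of x x] by (simp add: field_simps)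
  finally show ?thesis .
qed

lemma one_plus_mult_exp_neg_le:
  fixes lam t :: real
  assumes "0 < lam" "0 \<le> t"
  shows "(1 + t) * exp (- (lam * t)) \<le> 1 + 1 / lam"
proof -
  have "exp (- (lam * t)) \<le> 1"
    using assms by simp
  moreover have "t * exp (- (lam * t)) \<le> 1 / lam"
    using mult_exp_neg_le_1[of "lam * t"] assms by (simp add: field_simps)
  moreover have "(1 + t) * exp (- (lam * t)) = exp (- (lam * t)) + t * exp (- (lam * t))"
    by (simp add: distrib_right)
  ultimately show ?thesis
    by linarith
qed

text \<open>The geometric decay of \<open>(1 - x/4)^n\<close> absorbs the factor \<open>n\<close> of the mean value bound.\<close>

lemma Suc_mult_power_one_minus_le:
  fixes x :: real
  assumes x: "0 < x" "x \<le> 1"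
  shows "real (Suc n) * (1 - x / 4) ^ n \<le> 16 / (3 * x)"
proof -
  define b where "b = 1 - x / 4"
  have b: "3 / 4 \<le> b" "b \<le> exp (- (x / 4))"
    using x exp_ge_add_one_self[of "- (x / 4)"] by (auto simp: b_def)
  have "real (Suc n) * b ^ n \<le> real (Suc n) * (4 / 3 * exp (- (x / 4)) ^ Suc n)"
  proof -
    have "3 / 4 * b ^ n \<le> b * b ^ n"
      using b by (intro mult_right_mono) auto
    also have "\<dots> = b ^ Suc n"
      by simp
    also have "\<dots> \<le> exp (- (x / 4)) ^ Suc n"
      using b by (intro power_mono) auto
    finally show ?thesis
      by (intro mult_left_mono) auto
  qed
  also have "\<dots> = 16 / (3 * x) * (x * real (Suc n) / 4 * exp (- (x * real (Suc n) / 4)))"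
  proof -
    have "exp (- (x / 4)) ^ Suc n = exp (- (x * real (Suc n) / 4))"
      by (subst exp_of_nat_mult[symmetric]) (simp add: algebra_simps)
    then show ?thesis
      using x by simp
  qed
  also have "\<dots> \<le> 16 / (3 * x)"
    using mult_exp_neg_le_1[of "x * real (Suc n) / 4"] x by (intro mult_left_le) auto
  finally show ?thesis
    by (simp add: b_def)
qed

lemma abs_power_diff_exp_neg_le:
  fixes a x c :: real
  assumes x: "0 < x" "x \<le> 1" and a: "0 \<le> a" and c: "c \<le> 1 / 4"
    and close: "\<bar>a - exp (- x)\<bar> \<le> x * c"
  shows "\<bar>a ^ z - exp (- x) ^ z\<bar> \<le> 6 * c"
proof -
  define s where "s = exp (- x)"
  have "0 \<le> x * c"
    using close by linarith
  then have c0: "0 \<le> c"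
    using x by (simp add: zero_le_mult_iff)
  show ?thesis
  proof (cases z)
    case 0
    then show ?thesis
      using c0 by simp
  next
    case (Suc n)
    have xc: "x * c \<le> x / 4"
      using mult_left_mono[OF c, of x] x by simp
    have s: "s \<le> 1 - x / 2"
      using exp_neg_le_1_minus_half[of x] x by (simp add: s_def)
    then have sb: "s \<le> 1 - x / 4"
      using x by simp
    have ab: "a \<le> 1 - x / 4"
      using abs_le_D1[OF close] xc s unfolding s_def by linarith
    have "\<bar>a ^ Suc n - s ^ Suc n\<bar> \<le> real (Suc n) * (1 - x / 4) ^ n * \<bar>a - s\<bar>"
      using abs_power_Suc_diff_le[OF a ab _ sb] by (simp add: s_def)
    also have "\<dots> \<le> 16 / (3 * x) * \<bar>a - s\<bar>"
      by (rule mult_right_mono[OF Suc_mult_power_one_minus_le[OF x]]) simp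
    also have "\<dots> \<le> 16 / (3 * x) * (x * c)"
      using close x by (intro mult_left_mono) (auto simp: s_def)
    also have "\<dots> \<le> 6 * c"
      using x c0 by (simp add: field_simps)
    finally show ?thesis
      using Suc s_def by simp
  qed
qed

lemma exp_power_mul_one_minus_le:
  fixes lam K1 \<gamma> a H D :: real and k z :: nat
  assumes lam: "0 < lam" and k: "0 < real k" and \<gamma>: "0 < \<gamma>" and K1: "0 \<le> K1"
    and a: "a \<le> 1" and a_low: "1 - a \<le> 2 * (lam / real k)"
    and H: "1 - H \<le> D * (1 - a)" and D: "\<gamma> / real k * D \<le> K1 * (1 + real z / real k)"
  shows "exp (- lam / real k) ^ z * (1 - H) \<le> 2 * K1 * (lam + 1) / \<gamma>"
proof -
  have "D * (1 - a) \<le> max D 0 * (1 - a)"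
    using a by (intro mult_right_mono) auto
  then have "1 - H \<le> max D 0 * (1 - a)"
    using H by linarith
  also have "\<dots> \<le> max D 0 * (2 * (lam / real k))"
    using a_low by (intro mult_left_mono) auto
  also have "\<dots> = 2 * lam / \<gamma> * (\<gamma> / real k * max D 0)"
    using k \<gamma> by (simp add: field_simps)
  also have "\<dots> \<le> 2 * lam / \<gamma> * (K1 * (1 + real z / real k))"
    using D K1 k \<gamma> lam by (intro mult_left_mono) (auto simp: max_def)
  finally have H_low: "1 - H \<le> 2 * lam * K1 / \<gamma> * (1 + real z / real k)"
    by simp
  have sz: "exp (- lam / real k) ^ z = exp (- (lam * (real z / real k)))"
    by (simp add: exp_of_nat_mult[symmetric] algebra_simps)
  have "exp (- lam / real k) ^ z * (1 - H) \<le> exp (- lam / real k) ^ z * (2 * lam * K1 / \<gamma> * (1 + real z / real k))"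
    using H_low by (intro mult_left_mono) auto
  also have "\<dots> = 2 * lam * K1 / \<gamma> * ((1 + real z / real k) * exp (- (lam * (real z / real k))))"
    by (simp only: sz mult_ac)
  also have "\<dots> \<le> 2 * lam * K1 / \<gamma> * (1 + 1 / lam)"
    using one_plus_mult_exp_neg_le[of lam "real z / real k"] K1 lam \<gamma> by (intro mult_left_mono) auto
  also have "\<dots> = 2 * K1 / \<gamma> * (lam * (1 + 1 / lam))"
    by simp
  also have "\<dots> = 2 * K1 * (lam + 1) / \<gamma>"
    using lam by (simp add: distrib_left add_divide_distrib)
  finally show ?thesis .
qed

lemma power_mul_defect_le:
  fixes lam L K1 \<gamma> a H D :: real and k z :: nat
  assumes lam: "0 < lam" "lam \<le> real k" and \<gamma>: "0 < \<gamma>" "4 * L \<le> \<gamma>"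
    and L: "0 \<le> L" and K1: "0 \<le> K1" and a: "0 \<le> a" "a \<le> 1"
    and a_close: "\<bar>real k * \<gamma> * (a - exp (- lam / real k))\<bar> \<le> L * (real k * (1 - exp (- lam / real k)))"
    and H: "0 \<le> H" "H \<le> 1" "1 - H \<le> D * (1 - a)"
    and D: "\<gamma> / real k * D \<le> K1 * (1 + real z / real k)"
  shows "\<bar>a ^ z * H - exp (- lam / real k) ^ z\<bar> \<le> (6 * L + 2 * K1 * (lam + 1)) / \<gamma>"
proof -
  define x where "x = lam / real k"
  define s where "s = exp (- x)"
  have k: "0 < real k"
    using lam by linarith
  have x: "0 < x" "x \<le> 1"
    using lam k by (auto simp: x_def)
  have s: "0 < s" "1 - s \<le> x"
    using exp_ge_add_one_self[of "- x"] by (auto simp: s_def)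
  have es: "exp (- lam / real k) = s"
    by (simp add: s_def x_def)
  have Lg: "L / \<gamma> \<le> 1 / 4"
    using \<gamma> by (simp add: field_simps)
  have close: "\<bar>a - s\<bar> \<le> x * (L / \<gamma>)"
  proof -
    have "real k * \<gamma> * \<bar>a - s\<bar> \<le> L * (real k * (1 - s))"
      using a_close k \<gamma> by (simp add: s_def x_def abs_mult)
    also have "\<dots> \<le> L * (real k * x)"
      using L s k by (intro mult_left_mono) auto
    finally show ?thesis
      using k \<gamma> by (simp add: field_simps)
  qed
  have powers: "\<bar>a ^ z - s ^ z\<bar> \<le> 6 * (L / \<gamma>)"
    unfolding s_def by (rule abs_power_diff_exp_neg_le) (use x a Lg close s_def in auto)
  have "x * (L / \<gamma>) \<le> x * (1 / 4)"
    using x Lg by (intro mult_left_mono) auto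
  then have "1 - a \<le> 2 * x"
    using abs_le_D2[OF close] s x by linarith
  then have a_low: "1 - a \<le> 2 * (lam / real k)"
    by (simp add: x_def)
  have defect: "s ^ z * (1 - H) \<le> 2 * K1 * (lam + 1) / \<gamma>"
    using exp_power_mul_one_minus_le[OF lam(1) k \<gamma>(1) K1 a(2) a_low H(3) D] by (simp only: es)
  have "\<bar>a ^ z * H - s ^ z\<bar> = \<bar>(a ^ z - s ^ z) * H - s ^ z * (1 - H)\<bar>"
    by (simp add: algebra_simps)
  also have "\<dots> \<le> \<bar>(a ^ z - s ^ z) * H\<bar> + \<bar>s ^ z * (1 - H)\<bar>"
    by (rule abs_triangle_ineq4)
  also have "\<dots> = \<bar>a ^ z - s ^ z\<bar> * H + s ^ z * (1 - H)"
    using H s by (simp add: abs_mult)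
  also have "\<dots> \<le> \<bar>a ^ z - s ^ z\<bar> + s ^ z * (1 - H)"
    using H mult_left_le[of H "\<bar>a ^ z - s ^ z\<bar>"] by simp
  also have "\<dots> \<le> (6 * L + 2 * K1 * (lam + 1)) / \<gamma>"
    using powers defect by (simp add: add_divide_distrib)
  finally show ?thesis
    by (simp only: es)
qed

lemma nat_floor_le_iff: "nat \<lfloor>x\<rfloor> \<le> m \<longleftrightarrow> x < real m + 1"
  by (simp add: nat_le_iff floor_le_iff)

lemma nat_floor_add_diff_le:
  assumes "0 \<le> x" "0 \<le> y"
  shows "real (nat \<lfloor>x + y\<rfloor>) - real (nat \<lfloor>x\<rfloor>) \<le> y + 1"
proof -
  have "real (nat \<lfloor>x + y\<rfloor>) = real_of_int \<lfloor>x + y\<rfloor>" "real (nat \<lfloor>x\<rfloor>) = real_of_int \<lfloor>x\<rfloor>"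
    using assms by auto
  moreover have "real_of_int \<lfloor>x + y\<rfloor> \<le> x + y" "x < real_of_int \<lfloor>x\<rfloor> + 1"
    by linarith+
  ultimately show ?thesis
    by linarith
qed

lemma sum_window_eq:
  fixes f :: "nat \<Rightarrow> real"
  assumes "b \<le> n"
  shows "(\<Sum>m<n. of_bool (a \<le> m \<and> m < b) * f m) = (\<Sum>m\<in>{a..<b}. f m)"
proof -
  have "(\<Sum>m<n. of_bool (a \<le> m \<and> m < b) * f m) = (\<Sum>m<n. if a \<le> m \<and> m < b then f m else 0)"
    by (intro sum.cong) auto
  also have "\<dots> = (\<Sum>m\<in>{m\<in>{..<n}. a \<le> m \<and> m < b}. f m)"
    by (rule sum.inter_filter[symmetric]) simp
  also have "{m\<in>{..<n}. a \<le> m \<and> m < b} = {a..<b}"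
    using assms by auto
  finally show ?thesis .
qed

text \<open>\<open>(y - x)\<^sup>2 = (y\<^sup>2 - x\<^sup>2) - 2 x (y - x)\<close>, and both differences telescope along the window \<open>[a, b)\<close>.\<close>

lemma square_power_diff_window:
  fixes s :: real and f :: "nat \<Rightarrow> nat"
  assumes "a \<le> b" "b \<le> n"
  shows "(s ^ f b - s ^ f a)\<^sup>2 =
      (\<Sum>m<n. of_bool (a \<le> m \<and> m < b) * ((s\<^sup>2) ^ f (Suc m) - (s\<^sup>2) ^ f m)) -
      2 * (\<Sum>m<n. of_bool (a \<le> m \<and> m < b) * s ^ f a * (s ^ f (Suc m) - s ^ f m))"
proof -
  have "(\<Sum>m<n. of_bool (a \<le> m \<and> m < b) * ((s\<^sup>2) ^ f (Suc m) - (s\<^sup>2) ^ f m)) = (s\<^sup>2) ^ f b - (s\<^sup>2) ^ f a"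
    unfolding sum_window_eq[OF assms(2)] by (rule sum_Suc_diff'[OF assms(1)])
  also have "\<dots> = (s ^ f b)\<^sup>2 - (s ^ f a)\<^sup>2"
    by (simp only: power_mult[symmetric] mult.commute)
  finally have squares: "(\<Sum>m<n. of_bool (a \<le> m \<and> m < b) * ((s\<^sup>2) ^ f (Suc m) - (s\<^sup>2) ^ f m)) =
      (s ^ f b)\<^sup>2 - (s ^ f a)\<^sup>2" .
  have "(\<Sum>m<n. of_bool (a \<le> m \<and> m < b) * s ^ f a * (s ^ f (Suc m) - s ^ f m)) =
      s ^ f a * (\<Sum>m<n. of_bool (a \<le> m \<and> m < b) * (s ^ f (Suc m) - s ^ f m))"
    by (simp only: sum_distrib_left mult_ac)
  also have "\<dots> = s ^ f a * (s ^ f b - s ^ f a)"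
    unfolding sum_window_eq[OF assms(2)] using sum_Suc_diff'[OF assms(1), of "\<lambda>m. s ^ f m"] by simp
  finally have "(\<Sum>m<n. of_bool (a \<le> m \<and> m < b) * s ^ f a * (s ^ f (Suc m) - s ^ f m)) =
      s ^ f a * (s ^ f b - s ^ f a)" .
  with squares show ?thesis
    by (simp add: power2_eq_square algebra_simps)
qed

lemma tendsto_zero_if_le_vanishing:
  fixes a \<delta> \<gamma> :: "nat \<Rightarrow> real"
  assumes le: "eventually (\<lambda>k. a k \<le> C * (\<delta> k + 1 / \<gamma> k)) sequentially"
    and nonneg: "\<And>k. 0 \<le> a k" and \<delta>: "\<delta> \<longlonglongrightarrow> 0" and \<gamma>: "filterlim \<gamma> at_top sequentially"
  shows "a \<longlonglongrightarrow> 0"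
proof (rule tendsto_sandwich[OF always_eventually[OF allI[OF nonneg]] le tendsto_const])
  have "(\<lambda>k. C * (\<delta> k + inverse (\<gamma> k))) \<longlonglongrightarrow> C * (0 + 0)"
    by (intro tendsto_mult_left tendsto_add \<delta> tendsto_inverse_0_at_top[OF \<gamma>])
  then show "(\<lambda>k. C * (\<delta> k + 1 / \<gamma> k)) \<longlonglongrightarrow> 0"
    by (simp add: inverse_eq_divide)
qed

section \<open>Generating functions and independence\<close>

lemma geometric_sum_le:
  fixes u :: real
  assumes "0 \<le> u" "u < 1"
  shows "(\<Sum>i<p. u ^ i) \<le> 1 / (1 - u)"
proof -
  have "(\<Sum>i<p. u ^ i) = (1 - u ^ p) / (1 - u)"
    using one_diff_power_eq[of u p] assms by (simp add: field_simps)
  also have "\<dots> \<le> 1 / (1 - u)"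
    using assms by (intro divide_right_mono) auto
  finally show ?thesis .
qed

context prob_space
begin

lemma integrable_power_rv:
  fixes t :: real
  assumes "X \<in> measurable M (count_space UNIV)" "0 \<le> t" "t \<le> 1"
  shows "integrable M (\<lambda>\<omega>. t ^ X \<omega>)"
  by (rule integrable_const_bound[where B=1]) (use assms in \<open>auto simp: power_le_one\<close>)

lemma pgf_nonneg: "0 \<le> t \<Longrightarrow> 0 \<le> pgf M X t"
  unfolding pgf_def by (intro integral_nonneg_AE) auto

lemma pgf_le_1:
  assumes "X \<in> measurable M (count_space UNIV)" "0 \<le> t" "t \<le> 1"
  shows "pgf M X t \<le> 1"
proof -
  have "pgf M X t \<le> (\<integral>\<omega>. 1 \<partial>M)"
    unfolding pgf_def using assms
    by (intro integral_mono integrable_power_rv) (auto simp: power_le_one)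
  then show ?thesis
    by (simp add: prob_space)
qed

lemma pgf_1: "pgf M X 1 = 1"
  by (simp add: pgf_def prob_space)

lemma integrable_geometric_sum_rv:
  fixes t :: real
  assumes X: "X \<in> measurable M (count_space UNIV)" and t: "0 \<le> t" "t < 1"
  shows "integrable M (\<lambda>\<omega>. \<Sum>i<X \<omega>. t ^ i)"
proof (rule integrable_const_bound[where B="1 / (1 - t)"])
  show "AE \<omega> in M. norm (\<Sum>i<X \<omega>. t ^ i) \<le> 1 / (1 - t)"
    using geometric_sum_le[OF t] t by (auto simp: sum_nonneg)
qed (use X in simp)

lemma one_minus_pgf_eq:
  fixes t :: real
  assumes X: "X \<in> measurable M (count_space UNIV)" and t: "0 \<le> t" "t < 1"
  shows "1 - pgf M X t = (1 - t) * (\<integral>\<omega>. (\<Sum>i<X \<omega>. t ^ i) \<partial>M)"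
proof -
  have "1 - pgf M X t = (\<integral>\<omega>. 1 - t ^ X \<omega> \<partial>M)"
    unfolding pgf_def using integrable_power_rv[OF X] t by (simp add: prob_space)
  also have "\<dots> = (\<integral>\<omega>. (1 - t) * (\<Sum>i<X \<omega>. t ^ i) \<partial>M)"
    by (simp add: one_diff_power_eq)
  finally show ?thesis
    by simp
qed

text \<open>The difference quotient \<open>(1 - pgf t) / (1 - t) = E (\<Sum>i<X. t ^ i)\<close> is nondecreasing
  in \<open>t\<close>, hence bounded by its limit at \<open>1\<close>.\<close>

lemma one_minus_pgf_le_derivative:
  fixes f :: "real \<Rightarrow> real"
  assumes X: "X \<in> measurable M (count_space UNIV)"
    and f: "\<And>t. 0 \<le> t \<Longrightarrow> t \<le> 1 \<Longrightarrow> pgf M X t = f t"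
    and D: "(f has_real_derivative D) (at 1 within {0..1})"
    and t: "0 \<le> t" "t \<le> 1"
  shows "1 - f t \<le> D * (1 - t)"
proof (cases "t = 1")
  case True
  then show ?thesis
    using f[of 1] pgf_1 by simp
next
  case False
  then have t1: "t < 1"
    using t by simp
  define Q where "Q u = (\<integral>\<omega>. (\<Sum>i<X \<omega>. u ^ i) \<partial>M)" for u :: real
  have quotient: "(f u - f 1) / (u - 1) = Q u" if "0 \<le> u" "u < 1" for u
    using one_minus_pgf_eq[OF X that] f[of u] f[of 1] pgf_1 that by (simp add: Q_def field_simps)
  have lim: "((\<lambda>u. (f u - f 1) / (u - 1)) \<longlongrightarrow> D) (at_left 1)"
    using D unfolding has_field_derivative_iff by (simp add: at_within_Icc_at_left)
  have "eventually (\<lambda>u. Q t \<le> (f u - f 1) / (u - 1)) (at_left (1::real))"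
    unfolding eventually_at_left_field
  proof (intro exI[of _ t] conjI allI impI)
    fix u assume u: "t < u" "u < 1"
    have "Q t \<le> Q u"
      unfolding Q_def using u t
      by (intro integral_mono integrable_geometric_sum_rv[OF X] sum_mono power_mono) auto
    then show "Q t \<le> (f u - f 1) / (u - 1)"
      using quotient[of u] u t by simp
  qed (fact t1)
  then have "Q t \<le> D"
    by (rule tendsto_lowerbound[OF lim]) simp
  have "1 - f t = (1 - t) * Q t"
    using quotient[OF t(1) t1] f[of 1] pgf_1 t1 by (simp add: field_simps)
  also have "\<dots> \<le> (1 - t) * D"
    using \<open>Q t \<le> D\<close> t1 by (intro mult_left_mono) auto
  finally show ?thesis
    by (simp add: mult.commute)
qed

lemma integral_indep_eq_iterated:
  fixes F :: "'x \<times> 'y \<Rightarrow> real"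
  assumes X: "X \<in> measurable M N1" and Y: "Y \<in> measurable M N2"
    and indep: "\<And>A B. A \<in> sets N1 \<Longrightarrow> B \<in> sets N2 \<Longrightarrow>
       prob (X -` A \<inter> Y -` B \<inter> space M) = prob (X -` A \<inter> space M) * prob (Y -` B \<inter> space M)"
    and F: "F \<in> borel_measurable (N1 \<Otimes>\<^sub>M N2)" and F_bounded: "\<And>z. \<bar>F z\<bar> \<le> B"
  shows "(\<integral>\<omega>. F (X \<omega>, Y \<omega>) \<partial>M) = (\<integral>\<omega>. (\<integral>\<omega>'. F (X \<omega>, Y \<omega>') \<partial>M) \<partial>M)"
proof -
  interpret P1: prob_space "distr M N1 X" by (rule prob_space_distr) fact
  interpret P2: prob_space "distr M N2 Y" by (rule prob_space_distr) fact
  interpret P: pair_prob_space "distr M N1 X" "distr M N2 Y" ..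
  have XY: "(\<lambda>\<omega>. (X \<omega>, Y \<omega>)) \<in> measurable M (N1 \<Otimes>\<^sub>M N2)"
    by (intro measurable_Pair X Y)
  have joint: "distr M (N1 \<Otimes>\<^sub>M N2) (\<lambda>\<omega>. (X \<omega>, Y \<omega>)) = distr M N1 X \<Otimes>\<^sub>M distr M N2 Y"
  proof (rule pair_measure_eqI[symmetric])
    fix A B assume A: "A \<in> sets (distr M N1 X)" and B: "B \<in> sets (distr M N2 Y)"
    have "(\<lambda>\<omega>. (X \<omega>, Y \<omega>)) -` (A \<times> B) \<inter> space M = X -` A \<inter> Y -` B \<inter> space M"
      by auto
    then show "emeasure (distr M N1 X) A * emeasure (distr M N2 Y) B =
        emeasure (distr M (N1 \<Otimes>\<^sub>M N2) (\<lambda>\<omega>. (X \<omega>, Y \<omega>))) (A \<times> B)"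
      using indep[of A B] A B X Y XY
      by (simp add: emeasure_distr emeasure_eq_measure measure_nonneg ennreal_mult)
  qed (simp_all add: P1.sigma_finite_measure_axioms P2.sigma_finite_measure_axioms)
  have int: "integrable (distr M N1 X \<Otimes>\<^sub>M distr M N2 Y) F"
    by (rule P.integrable_const_bound[where B=B]) (use F F_bounded in auto)
  have inner: "(\<integral>y. F (x, y) \<partial>distr M N2 Y) = (\<integral>\<omega>'. F (x, Y \<omega>') \<partial>M)"
    if "x \<in> space N1" for x
    by (intro integral_distr Y measurable_Pair2[OF F] that)
  have "(\<integral>\<omega>. F (X \<omega>, Y \<omega>) \<partial>M) = (\<integral>z. F z \<partial>(distr M N1 X \<Otimes>\<^sub>M distr M N2 Y))"
    by (subst joint[symmetric], subst integral_distr) (auto intro!: XY F)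
  also have "\<dots> = (\<integral>x. (\<integral>y. F (x, y) \<partial>distr M N2 Y) \<partial>distr M N1 X)"
    by (rule P.integral_fst'[OF int, symmetric])
  also have "\<dots> = (\<integral>x. (\<integral>\<omega>'. F (x, Y \<omega>') \<partial>M) \<partial>distr M N1 X)"
    by (intro Bochner_Integration.integral_cong) (auto simp: inner)
  also have "\<dots> = (\<integral>\<omega>. (\<integral>\<omega>'. F (X \<omega>, Y \<omega>') \<partial>M) \<partial>M)"
  proof (rule integral_distr[OF X])
    have "(\<lambda>x. \<integral>y. F (x, y) \<partial>distr M N2 Y) \<in> borel_measurable N1"
      using P2.borel_measurable_lebesgue_integral[of "\<lambda>x y. F (x, y)" N1] F by (simp add: case_prod_eta)
    then show "(\<lambda>x. \<integral>\<omega>'. F (x, Y \<omega>') \<partial>M) \<in> borel_measurable N1"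
      by (rule measurable_cong[THEN iffD1, rotated]) (simp add: inner)
  qed
  finally show ?thesis .
qed

end

section \<open>The driving randomness\<close>

abbreviation nat_seq_space :: "(nat \<Rightarrow> nat) measure" where
  "nat_seq_space \<equiv> PiM UNIV (\<lambda>_. count_space UNIV)"

text \<open>A source carries the events of one driving variable: \<open>Off n i\<close> the \<open>i\<close>-th offspring number in
  generation \<open>n\<close>, \<open>Imm n\<close> the immigration function of generation \<open>n\<close>, \<open>Init\<close> the initial size. The
  sources before \<open>n\<close> determine \<open>Z 0, \<dots>, Z n\<close>; the sources of generation \<open>n\<close> drive the step to
  \<open>Z (Suc n)\<close>.\<close>

definition driving_events :: "(nat \<Rightarrow> nat \<Rightarrow> 'a \<Rightarrow> nat) \<Rightarrow> (nat \<Rightarrow> 'a \<Rightarrow> nat \<Rightarrow> nat) \<Rightarrow>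
    ('a \<Rightarrow> nat) \<Rightarrow> 'a measure \<Rightarrow> src \<Rightarrow> 'a set set" where
  "driving_events xi psi Z0 M j = (case j of
      Off n i \<Rightarrow> {xi n i -` A \<inter> space M | A. True}
    | Imm n \<Rightarrow> {psi n -` A \<inter> space M | A. A \<in> sets nat_seq_space}
    | Init \<Rightarrow> {Z0 -` A \<inter> space M | A. True})"

definition driving_sources :: "src set" where
  "driving_sources = {Off n i | n i. 1 \<le> i} \<union> range Imm \<union> {Init}"

definition sources_before :: "nat \<Rightarrow> src set" where
  "sources_before n = {Off m i | m i. 1 \<le> i \<and> m < n} \<union> Imm ` {..<n} \<union> {Init}"

definition generation_sources :: "nat \<Rightarrow> src set" where
  "generation_sources n = {Off n i | i. 1 \<le> i} \<union> {Imm n}"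

lemma sources_before_subset: "sources_before n \<subseteq> driving_sources"
  and generation_sources_subset: "generation_sources n \<subseteq> driving_sources"
  and sources_before_generation_disjoint: "sources_before n \<inter> generation_sources n = {}"
  by (auto simp: sources_before_def generation_sources_def driving_sources_def)

lemma sources_before_mono: "m \<le> n \<Longrightarrow> sources_before m \<subseteq> sources_before n"
  by (auto simp: sources_before_def)

lemma Int_stable_vimage:
  assumes "\<And>A B. P A \<Longrightarrow> P B \<Longrightarrow> P (A \<inter> B)"
  shows "Int_stable {f -` A \<inter> S | A. P A}"
proof (rule Int_stableI, clarify)
  fix A B assume "P A" "P B"
  then show "\<exists>C. f -` A \<inter> S \<inter> (f -` B \<inter> S) = f -` C \<inter> S \<and> P C"
    using assms by (intro exI[of _ "A \<inter> B"]) auto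
qed

lemma measurable_sigmaI:
  assumes "G \<subseteq> Pow \<Omega>" "\<And>x. x \<in> \<Omega> \<Longrightarrow> f x \<in> space N"
    and "\<And>A. A \<in> sets N \<Longrightarrow> f -` A \<inter> \<Omega> \<in> G"
  shows "f \<in> measurable (sigma \<Omega> G) N"
  using assms by (intro measurableI) (auto simp: sets_measure_of space_measure_of)

lemma rho_Yproc:
  "rho lam (Yproc k \<gamma> Z t \<omega>) (Yproc k \<gamma> Z u \<omega>) =
    \<bar>exp (- lam / real k) ^ Z (nat \<lfloor>\<gamma> * t\<rfloor>) \<omega> - exp (- lam / real k) ^ Z (nat \<lfloor>\<gamma> * u\<rfloor>) \<omega>\<bar>"
proof -
  have exp_power: "exp (- lam * (real n / real k)) = exp (- lam / real k) ^ n" for n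
    by (simp add: exp_of_nat_mult[symmetric] algebra_simps)
  show ?thesis
    unfolding rho_def Yproc_def exp_power ..
qed

locale branching_immigration = prob_space M for M :: "'a measure" +
  fixes xi :: "nat \<Rightarrow> nat \<Rightarrow> 'a \<Rightarrow> nat" and psi :: "nat \<Rightarrow> 'a \<Rightarrow> nat \<Rightarrow> nat" and Z0 :: "'a \<Rightarrow> nat"
  assumes xi_measurable: "\<And>n i. xi n i \<in> measurable M (count_space UNIV)"
    and psi_measurable: "\<And>n. psi n \<in> measurable M nat_seq_space"
    and Z0_measurable: "Z0 \<in> measurable M (count_space UNIV)"
    and indep_driving: "indep_sets (driving_events xi psi Z0 M) driving_sources"
begin

abbreviation source_events :: "src \<Rightarrow> 'a set set" where
  "source_events \<equiv> driving_events xi psi Z0 M"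

abbreviation Z :: "nat \<Rightarrow> 'a \<Rightarrow> nat" where
  "Z \<equiv> Zproc xi psi Z0"

definition generated :: "src set \<Rightarrow> 'a measure" where
  "generated Q = sigma (space M) (\<Union>(source_events ` Q))"

abbreviation past :: "nat \<Rightarrow> 'a measure" where
  "past n \<equiv> generated (sources_before n)"

lemma source_events_Int_stable: "Int_stable (source_events j)"
proof -
  have "Int_stable {f -` A \<inter> space M | A. True}" for f :: "'a \<Rightarrow> nat"
    by (rule Int_stable_vimage) simp
  then show ?thesis
    unfolding driving_events_def by (cases j) (auto intro!: Int_stable_vimage)
qed

lemma source_events_subset_sets: "source_events j \<subseteq> sets M"
  unfolding driving_events_def using xi_measurable psi_measurable Z0_measurable
  by (cases j) (auto intro!: measurable_sets)

lemma source_events_subset_Pow: "\<Union>(source_events ` Q) \<subseteq> Pow (space M)"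
  using source_events_subset_sets sets.sets_into_space by blast

lemma sets_generated: "sets (generated Q) = sigma_sets (space M) (\<Union>(source_events ` Q))"
  unfolding generated_def using source_events_subset_Pow by (rule sets_measure_of)

lemma space_generated [simp]: "space (generated Q) = space M"
  unfolding generated_def using source_events_subset_Pow by (rule space_measure_of)

lemma subalgebra_generated: "subalgebra M (generated Q)"
  unfolding subalgebra_def sets_generated using source_events_subset_sets
  by (auto intro!: sets.sigma_sets_subset)

lemma past_mono: "m \<le> n \<Longrightarrow> sets (past m) \<subseteq> sets (past n)"
  unfolding sets_generated using sources_before_mono by (intro sigma_sets_mono') auto

lemma measurable_generated_M: "f \<in> measurable (generated Q) N \<Longrightarrow> f \<in> measurable M N"
  by (rule measurable_from_subalg[OF subalgebra_generated])

lemma indep_generated: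
  assumes "P \<subseteq> driving_sources" "Q \<subseteq> driving_sources" "P \<inter> Q = {}"
    and f: "f \<in> measurable (generated P) N1" and g: "g \<in> measurable (generated Q) N2"
    and A: "A \<in> sets N1" and B: "B \<in> sets N2"
  shows "prob (f -` A \<inter> g -` B \<inter> space M) = prob (f -` A \<inter> space M) * prob (g -` B \<inter> space M)"
proof -
  have "indep_sets (\<lambda>b. sigma_sets (space M) (\<Union>i\<in>case_bool P Q b. source_events i)) UNIV"
  proof (rule indep_sets_collect_sigma)
    show "indep_sets source_events (\<Union>b\<in>UNIV. case_bool P Q b)"
      by (rule indep_sets_mono_index[OF _ indep_driving]) (use assms in \<open>auto split: bool.splits\<close>)
    show "disjoint_family_on (case_bool P Q) UNIV"
      using assms by (auto simp: disjoint_family_on_def split: bool.split)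
  qed (rule source_events_Int_stable)
  then have "indep_set (sets (generated P)) (sets (generated Q))"
    unfolding indep_set_def sets_generated
    by (rule indep_sets_cong[THEN iffD1, rotated 2]) (auto split: bool.split)
  moreover have "f -` A \<inter> space M \<in> sets (generated P)" "g -` B \<inter> space M \<in> sets (generated Q)"
    using measurable_sets[OF f A] measurable_sets[OF g B] by simp_all
  ultimately have "prob ((f -` A \<inter> space M) \<inter> (g -` B \<inter> space M)) =
      prob (f -` A \<inter> space M) * prob (g -` B \<inter> space M)"
    by (rule indep_setD)
  then show ?thesis
    by (simp add: Int_assoc Int_left_commute)
qed

lemma xi_measurable_generated:
  assumes "Off n i \<in> Q"
  shows "xi n i \<in> measurable (generated Q) (count_space UNIV)"
  unfolding generated_def
proof (rule measurable_sigmaI[OF source_events_subset_Pow])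
  fix A
  show "xi n i -` A \<inter> space M \<in> \<Union>(source_events ` Q)"
    using assms by (intro UN_I[of "Off n i"]) (auto simp: driving_events_def)
qed auto

lemma psi_measurable_generated:
  assumes "Imm n \<in> Q"
  shows "psi n \<in> measurable (generated Q) nat_seq_space"
  unfolding generated_def
proof (rule measurable_sigmaI[OF source_events_subset_Pow])
  fix A :: "(nat \<Rightarrow> nat) set" assume "A \<in> sets nat_seq_space"
  then show "psi n -` A \<inter> space M \<in> \<Union>(source_events ` Q)"
    using assms by (intro UN_I[of "Imm n"]) (auto simp: driving_events_def)
qed (auto simp: space_PiM)

lemma Z0_measurable_generated:
  assumes "Init \<in> Q"
  shows "Z0 \<in> measurable (generated Q) (count_space UNIV)"
  unfolding generated_def
proof (rule measurable_sigmaI[OF source_events_subset_Pow])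
  fix A
  show "Z0 -` A \<inter> space M \<in> \<Union>(source_events ` Q)"
    using assms by (intro UN_I[of Init]) (auto simp: driving_events_def)
qed auto

lemma offspring_measurable_generated:
  "(\<And>i. 1 \<le> i \<Longrightarrow> Off n i \<in> Q) \<Longrightarrow>
    (\<lambda>\<omega> j. xi n (Suc j) \<omega>) \<in> measurable (generated Q) nat_seq_space"
  by (rule measurable_PiM_single') (auto intro!: xi_measurable_generated simp: space_PiM)

lemma Z_Suc: "Z (Suc m) \<omega> = (\<Sum>i<Z m \<omega> + psi m \<omega> (Z m \<omega>). xi m (Suc i) \<omega>)"
  by (simp add: sum.atLeast1_atMost_eq)

lemma Z_measurable_past: "m \<le> n \<Longrightarrow> Z m \<in> measurable (past n) (count_space UNIV)"
proof (induction m)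
  case 0
  then show ?case
    by (simp add: Z0_measurable_generated sources_before_def)
next
  case (Suc m)
  then have Zm: "Z m \<in> measurable (past n) (count_space UNIV)"
    by simp
  have "psi m \<in> measurable (past n) nat_seq_space"
    using Suc.prems by (intro psi_measurable_generated) (auto simp: sources_before_def)
  then have "(\<lambda>\<omega>. psi m \<omega> z) \<in> measurable (past n) (count_space UNIV)" for z
    by measurable
  then have "(\<lambda>\<omega>. Z m \<omega> + psi m \<omega> (Z m \<omega>)) \<in> measurable (past n) (count_space UNIV)"
    using Zm by (intro measurable_compose_countable[where f="\<lambda>z \<omega>. z + psi m \<omega> z", OF _ Zm]) measurable
  moreover have "xi m (Suc i) \<in> measurable (past n) (count_space UNIV)" for i
    using Suc.prems by (intro xi_measurable_generated) (auto simp: sources_before_def)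
  then have "(\<lambda>\<omega>. \<Sum>i<q. xi m (Suc i) \<omega>) \<in> measurable (past n) (count_space UNIV)" for q
    by measurable
  ultimately show ?case
    unfolding Z_Suc[abs_def] by (rule measurable_compose_countable[rotated])
qed

lemma Z_measurable: "Z m \<in> measurable M (count_space UNIV)"
  by (rule measurable_generated_M[OF Z_measurable_past[OF order_refl]])

subsection \<open>One-step increments\<close>

lemma integral_power_offspring_sum:
  fixes s a :: real
  assumes s: "0 \<le> s" "s \<le> 1" and pgf_xi: "\<And>i. 1 \<le> i \<Longrightarrow> pgf M (xi n i) s = a"
  shows "(\<integral>\<omega>. s ^ (\<Sum>i<q. xi n (Suc i) \<omega>) \<partial>M) = a ^ q"
proof -
  define J where "J = (\<lambda>i. Off n (Suc i)) ` {..<q}"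
  define X where "X j \<omega> = s ^ xi n (case j of Off _ i \<Rightarrow> i | _ \<Rightarrow> 0) \<omega>" for j \<omega>
  have X_measurable: "X j \<in> borel_measurable M" for j
    unfolding X_def using xi_measurable by simp
  have "indep_sets source_events J"
    by (rule indep_sets_mono_index[OF _ indep_driving]) (auto simp: J_def driving_sources_def)
  then have "indep_sets (\<lambda>j. {X j -` A \<inter> space M | A. A \<in> sets borel}) J"
  proof (rule indep_sets_mono_sets)
    fix j assume "j \<in> J"
    then obtain i where j: "j = Off n i"
      unfolding J_def by auto
    have "X j -` A \<inter> space M = xi n i -` ((\<lambda>m. s ^ m) -` A) \<inter> space M" for A
      by (auto simp: X_def j)
    then show "{X j -` A \<inter> space M | A. A \<in> sets borel} \<subseteq> source_events j"
      by (auto simp: driving_events_def j)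
  qed
  then have indep: "indep_vars (\<lambda>_. borel) X J"
    unfolding indep_vars_def2 using X_measurable by auto
  have "(\<integral>\<omega>. (\<Prod>j\<in>J. X j \<omega>) \<partial>M) = (\<Prod>j\<in>J. \<integral>\<omega>. X j \<omega> \<partial>M)"
  proof (rule indep_vars_lebesgue_integral[OF _ indep])
    show "integrable M (X j)" for j
      by (rule integrable_const_bound[where B=1]) (use s X_measurable in \<open>auto simp: X_def power_le_one\<close>)
  qed (simp add: J_def)
  moreover have "(\<Prod>j\<in>J. X j \<omega>) = s ^ (\<Sum>i<q. xi n (Suc i) \<omega>)" for \<omega>
    by (simp add: J_def prod.reindex inj_on_def power_sum X_def)
  moreover have "(\<Prod>j\<in>J. \<integral>\<omega>. X j \<omega> \<partial>M) = a ^ q"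
    using pgf_xi by (simp add: J_def prod.reindex inj_on_def X_def pgf_def)
  ultimately show ?thesis
    by simp
qed

lemma integral_power_generation:
  fixes s a :: real
  assumes s: "0 \<le> s" "s \<le> 1" and pgf_xi: "\<And>i. 1 \<le> i \<Longrightarrow> pgf M (xi n i) s = a"
  shows "(\<integral>\<omega>. s ^ (\<Sum>j<z + psi n \<omega> z. xi n (Suc j) \<omega>) \<partial>M) = a ^ z * pgf M (\<lambda>\<omega>. psi n \<omega> z) a"
proof -
  define F where "F = (\<lambda>(p :: nat \<Rightarrow> nat, xs :: nat \<Rightarrow> nat). s ^ (\<Sum>j<z + p z. xs j))"
  have "(\<lambda>v. s ^ (\<Sum>j<z + fst v z. snd v j)) \<in> borel_measurable (nat_seq_space \<Otimes>\<^sub>M nat_seq_space)"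
    by (rule measurable_compose_countable[where f="\<lambda>q v. s ^ (\<Sum>j<q. snd v j)"]) measurable
  then have F_measurable: "F \<in> borel_measurable (nat_seq_space \<Otimes>\<^sub>M nat_seq_space)"
    unfolding F_def by (simp add: case_prod_beta')
  have F_bounded: "\<bar>F v\<bar> \<le> 1" for v
    using s by (auto simp: F_def power_le_one split: prod.split)
  have imm: "psi n \<in> measurable (generated {Imm n}) nat_seq_space"
    by (rule psi_measurable_generated) simp
  have off: "(\<lambda>\<omega> j. xi n (Suc j) \<omega>) \<in> measurable (generated {Off n i | i. 1 \<le> i}) nat_seq_space"
    by (rule offspring_measurable_generated) auto
  have "(\<integral>\<omega>. F (psi n \<omega>, \<lambda>j. xi n (Suc j) \<omega>) \<partial>M) =
      (\<integral>\<omega>. (\<integral>\<omega>'. F (psi n \<omega>, \<lambda>j. xi n (Suc j) \<omega>') \<partial>M) \<partial>M)"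
  proof (rule integral_indep_eq_iterated[OF measurable_generated_M[OF imm] measurable_generated_M[OF off]
        _ F_measurable F_bounded])
    fix A B assume "A \<in> sets nat_seq_space" "B \<in> sets nat_seq_space"
    then show "prob (psi n -` A \<inter> (\<lambda>\<omega> j. xi n (Suc j) \<omega>) -` B \<inter> space M) =
        prob (psi n -` A \<inter> space M) * prob ((\<lambda>\<omega> j. xi n (Suc j) \<omega>) -` B \<inter> space M)"
      by (intro indep_generated[OF _ _ _ imm off]) (auto simp: driving_sources_def)
  qed
  also have "\<dots> = (\<integral>\<omega>. a ^ z * a ^ psi n \<omega> z \<partial>M)"
    using integral_power_offspring_sum[OF s pgf_xi] by (simp add: F_def power_add)
  finally show ?thesis
    by (simp add: F_def pgf_def)
qed

lemma integral_generation_eq_iterated: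
  fixes F :: "'x \<times> (nat \<Rightarrow> nat) \<times> (nat \<Rightarrow> nat) \<Rightarrow> real"
  assumes X: "X \<in> measurable (past n) N"
    and F: "F \<in> borel_measurable (N \<Otimes>\<^sub>M (nat_seq_space \<Otimes>\<^sub>M nat_seq_space))"
    and F_bounded: "\<And>v. \<bar>F v\<bar> \<le> B"
  shows "(\<integral>\<omega>. F (X \<omega>, (psi n \<omega>, \<lambda>j. xi n (Suc j) \<omega>)) \<partial>M) =
    (\<integral>\<omega>. (\<integral>\<omega>'. F (X \<omega>, (psi n \<omega>', \<lambda>j. xi n (Suc j) \<omega>')) \<partial>M) \<partial>M)"
proof -
  have generation: "(\<lambda>\<omega>. (psi n \<omega>, \<lambda>j. xi n (Suc j) \<omega>))
      \<in> measurable (generated (generation_sources n)) (nat_seq_space \<Otimes>\<^sub>M nat_seq_space)"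
    by (intro measurable_Pair psi_measurable_generated offspring_measurable_generated)
      (auto simp: generation_sources_def)
  show ?thesis
  proof (rule integral_indep_eq_iterated[OF measurable_generated_M[OF X]
        measurable_generated_M[OF generation] _ F F_bounded])
    fix A B' assume "A \<in> sets N" "B' \<in> sets (nat_seq_space \<Otimes>\<^sub>M nat_seq_space)"
    then show "prob (X -` A \<inter> (\<lambda>\<omega>. (psi n \<omega>, \<lambda>j. xi n (Suc j) \<omega>)) -` B' \<inter> space M) =
        prob (X -` A \<inter> space M) * prob ((\<lambda>\<omega>. (psi n \<omega>, \<lambda>j. xi n (Suc j) \<omega>)) -` B' \<inter> space M)"
      by (intro indep_generated[OF sources_before_subset generation_sources_subset
            sources_before_generation_disjoint X generation])
  qed
qed

text \<open>With \<open>a = g(s)\<close> this is the conditional expectation of \<open>s ^ Z (Suc n)\<close> given \<open>Z n = z\<close>.\<close>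

definition transition_pgf :: "nat \<Rightarrow> real \<Rightarrow> nat \<Rightarrow> real" where
  "transition_pgf n a z = a ^ z * pgf M (\<lambda>\<omega>. psi n \<omega> z) a"

lemma transition_pgf_measurable_past:
  "(\<lambda>\<omega>. transition_pgf n a (Z m \<omega>)) \<in> borel_measurable (past m)"
  by (rule measurable_compose_countable[where f="\<lambda>z \<omega>. transition_pgf n a z", OF _ Z_measurable_past]) auto

lemma integral_past_mul_power_Suc:
  fixes s a B :: real and W :: "'a \<Rightarrow> real"
  assumes s: "0 \<le> s" "s \<le> 1" and pgf_xi: "\<And>i. 1 \<le> i \<Longrightarrow> pgf M (xi n i) s = a"
    and W: "W \<in> borel_measurable (past n)" and W_bounded: "\<And>\<omega>. \<omega> \<in> space M \<Longrightarrow> \<bar>W \<omega>\<bar> \<le> B"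
  shows "(\<integral>\<omega>. W \<omega> * s ^ Z (Suc n) \<omega> \<partial>M) = (\<integral>\<omega>. W \<omega> * transition_pgf n a (Z n \<omega>) \<partial>M)"
proof -
  have B: "0 \<le> B"
    using W_bounded[of "SOME x. x \<in> space M"] not_empty some_in_eq by fastforce
  \<comment> \<open>clipping makes the integrand bounded on the whole product space\<close>
  define clip where "clip w = max (- B) (min B w)" for w :: real
  have clip: "\<omega> \<in> space M \<Longrightarrow> clip (W \<omega>) = W \<omega>" for \<omega>
    using W_bounded[of \<omega>] by (auto simp: clip_def)
  define F where "F = (\<lambda>((w :: real, z :: nat), (p :: nat \<Rightarrow> nat, xs :: nat \<Rightarrow> nat)).
      clip w * s ^ (\<Sum>j<z + p z. xs j))"
  let ?N = "(borel \<Otimes>\<^sub>M count_space UNIV) \<Otimes>\<^sub>M (nat_seq_space \<Otimes>\<^sub>M nat_seq_space)"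
  have "(\<lambda>v. snd (fst v) + fst (snd v) (snd (fst v))) \<in> measurable ?N (count_space UNIV)"
    by (rule measurable_compose_countable[where f="\<lambda>u v. u + fst (snd v) u"]) measurable
  then have "(\<lambda>v. clip (fst (fst v)) * s ^ (\<Sum>j<snd (fst v) + fst (snd v) (snd (fst v)). snd (snd v) j))
      \<in> borel_measurable ?N"
    by (rule measurable_compose_countable[where f="\<lambda>q v. clip (fst (fst v)) * s ^ (\<Sum>j<q. snd (snd v) j)",
          rotated]) (unfold clip_def, measurable)
  then have F_measurable: "F \<in> borel_measurable ?N"
    unfolding F_def by (simp add: case_prod_beta')
  have F_bounded: "\<bar>F v\<bar> \<le> B" for v
  proof -
    obtain w z p xs where v: "v = ((w, z), (p, xs))"
      by (metis prod.exhaust)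
    have "\<bar>clip w\<bar> * \<bar>s ^ (\<Sum>j<z + p z. xs j)\<bar> \<le> B * 1"
      using B s by (intro mult_mono) (auto simp: clip_def power_le_one)
    then show ?thesis
      by (simp add: F_def v abs_mult)
  qed
  have state: "(\<lambda>\<omega>. (W \<omega>, Z n \<omega>)) \<in> measurable (past n) (borel \<Otimes>\<^sub>M count_space UNIV)"
    using W Z_measurable_past[of n n] by measurable
  have "(\<integral>\<omega>. W \<omega> * s ^ Z (Suc n) \<omega> \<partial>M) = (\<integral>\<omega>. F ((W \<omega>, Z n \<omega>), (psi n \<omega>, \<lambda>j. xi n (Suc j) \<omega>)) \<partial>M)"
    by (intro Bochner_Integration.integral_cong) (simp_all add: F_def clip Z_Suc del: Zproc.simps)
  also have "\<dots> = (\<integral>\<omega>. (\<integral>\<omega>'. F ((W \<omega>, Z n \<omega>), (psi n \<omega>', \<lambda>j. xi n (Suc j) \<omega>')) \<partial>M) \<partial>M)"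
    by (rule integral_generation_eq_iterated[OF state F_measurable F_bounded])
  also have "\<dots> = (\<integral>\<omega>. W \<omega> * transition_pgf n a (Z n \<omega>) \<partial>M)"
    using integral_power_generation[OF s pgf_xi]
    by (intro Bochner_Integration.integral_cong) (simp_all add: F_def clip transition_pgf_def)
  finally show ?thesis .
qed

lemma abs_integral_past_mul_increment_le:
  fixes s a \<epsilon> :: real and W :: "'a \<Rightarrow> real"
  assumes s: "0 \<le> s" "s \<le> 1" and pgf_xi: "\<And>i. 1 \<le> i \<Longrightarrow> pgf M (xi m i) s = a"
    and defect: "\<And>z. \<bar>transition_pgf m a z - s ^ z\<bar> \<le> \<epsilon>"
    and W: "W \<in> borel_measurable (past m)" and W_bounded: "\<And>\<omega>. \<omega> \<in> space M \<Longrightarrow> \<bar>W \<omega>\<bar> \<le> 1"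
  shows "\<bar>\<integral>\<omega>. W \<omega> * (s ^ Z (Suc m) \<omega> - s ^ Z m \<omega>) \<partial>M\<bar> \<le> \<epsilon> * (\<integral>\<omega>. \<bar>W \<omega>\<bar> \<partial>M)"
proof -
  have W_M: "W \<in> borel_measurable M"
    by (rule measurable_generated_M[OF W])
  have T_M: "(\<lambda>\<omega>. transition_pgf m a (Z m \<omega>)) \<in> borel_measurable M"
    by (rule measurable_generated_M[OF transition_pgf_measurable_past])
  have int_power: "integrable M (\<lambda>\<omega>. W \<omega> * s ^ Z j \<omega>)" for j
    by (rule integrable_const_bound[where B=1])
      (use W_bounded s W_M Z_measurable in \<open>auto simp: abs_mult intro!: mult_le_one power_le_one\<close>)
  have bounded_defect: "\<bar>W \<omega> * (transition_pgf m a (Z m \<omega>) - s ^ Z m \<omega>)\<bar> \<le> \<epsilon> * \<bar>W \<omega>\<bar>" for \<omega>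
    using mult_left_mono[OF defect[of "Z m \<omega>"], of "\<bar>W \<omega>\<bar>"] by (simp add: abs_mult mult.commute)
  have "0 \<le> \<epsilon>"
    by (meson abs_ge_zero defect order_trans)
  then have "\<bar>W \<omega> * (transition_pgf m a (Z m \<omega>) - s ^ Z m \<omega>)\<bar> \<le> \<epsilon>" if "\<omega> \<in> space M" for \<omega>
    using bounded_defect[of \<omega>] mult_left_mono[OF W_bounded[OF that], of \<epsilon>] by simp
  then have int_defect: "integrable M (\<lambda>\<omega>. W \<omega> * (transition_pgf m a (Z m \<omega>) - s ^ Z m \<omega>))"
    by (intro integrable_const_bound[where B=\<epsilon>]) (use W_M T_M Z_measurable in auto)
  have "(\<integral>\<omega>. W \<omega> * (s ^ Z (Suc m) \<omega> - s ^ Z m \<omega>) \<partial>M) =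
      (\<integral>\<omega>. W \<omega> * s ^ Z (Suc m) \<omega> \<partial>M) - (\<integral>\<omega>. W \<omega> * s ^ Z m \<omega> \<partial>M)"
    using int_power by (simp add: right_diff_distrib del: Zproc.simps)
  also have "\<dots> = (\<integral>\<omega>. W \<omega> * (transition_pgf m a (Z m \<omega>) - s ^ Z m \<omega>) \<partial>M)"
  proof -
    have "integrable M (\<lambda>\<omega>. W \<omega> * transition_pgf m a (Z m \<omega>))"
      using Bochner_Integration.integrable_add[OF int_defect int_power[of m]] by (simp add: algebra_simps)
    then show ?thesis
      using integral_past_mul_power_Suc[OF s pgf_xi W, of 1] W_bounded int_power[of m]
      by (simp add: right_diff_distrib del: Zproc.simps)
  qed
  finally have "\<bar>\<integral>\<omega>. W \<omega> * (s ^ Z (Suc m) \<omega> - s ^ Z m \<omega>) \<partial>M\<bar> \<le>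
      (\<integral>\<omega>. \<bar>W \<omega> * (transition_pgf m a (Z m \<omega>) - s ^ Z m \<omega>)\<bar> \<partial>M)"
    by (simp add: integral_abs_bound)
  also have "\<dots> \<le> (\<integral>\<omega>. \<epsilon> * \<bar>W \<omega>\<bar> \<partial>M)"
  proof (rule integral_mono)
    show "integrable M (\<lambda>\<omega>. \<epsilon> * \<bar>W \<omega>\<bar>)"
      by (intro integrable_mult_right integrable_abs integrable_const_bound[where B=1])
        (use W_bounded W_M in auto)
  qed (use int_defect bounded_defect in auto)
  finally show ?thesis
    by simp
qed

lemma integrable_past_mul_increment:
  fixes s :: real and W :: "'a \<Rightarrow> real"
  assumes s: "0 \<le> s" "s \<le> 1" and W: "W \<in> borel_measurable (past m)"
    and W_bounded: "\<And>\<omega>. \<omega> \<in> space M \<Longrightarrow> \<bar>W \<omega>\<bar> \<le> 1"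
  shows "integrable M (\<lambda>\<omega>. W \<omega> * (s ^ Z (Suc m) \<omega> - s ^ Z m \<omega>))"
proof (rule integrable_const_bound[where B=1])
  show "(\<lambda>\<omega>. W \<omega> * (s ^ Z (Suc m) \<omega> - s ^ Z m \<omega>)) \<in> borel_measurable M"
    using measurable_generated_M[OF W] Z_measurable by measurable
  have "\<bar>s ^ p - s ^ q\<bar> \<le> 1" for p q
    using power_le_one[OF s, of p] power_le_one[OF s, of q] zero_le_power[OF s(1), of p]
      zero_le_power[OF s(1), of q]
    by linarith
  then show "AE \<omega> in M. norm (W \<omega> * (s ^ Z (Suc m) \<omega> - s ^ Z m \<omega>)) \<le> 1"
    using W_bounded by (auto simp: abs_mult intro!: mult_le_one)
qed

lemma transition_pgf_defect_le:
  fixes g :: "real \<Rightarrow> real" and h :: "nat \<Rightarrow> real \<Rightarrow> real" and k :: nat and \<gamma> lam L K1 :: real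
  assumes lam: "0 < lam" "lam \<le> real k" and \<gamma>: "0 < \<gamma>" "4 * L \<le> \<gamma>" and L: "0 \<le> L" and K1: "0 \<le> K1"
    and pgf_xi: "\<And>n i s. 1 \<le> i \<Longrightarrow> 0 \<le> s \<Longrightarrow> s \<le> 1 \<Longrightarrow> pgf M (xi n i) s = g s"
    and pgf_psi: "\<And>n z s. 0 \<le> s \<Longrightarrow> s \<le> 1 \<Longrightarrow> pgf M (\<lambda>\<omega>. psi n \<omega> z) s = h z s"
    and lipschitz: "\<And>\<mu>. 0 \<le> \<mu> \<Longrightarrow> \<mu> \<le> lam \<Longrightarrow> \<mu> \<le> real k \<Longrightarrow>
      \<bar>Rk g k \<gamma> \<mu> - Rk g k \<gamma> 0\<bar> \<le> L * \<mu>"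
    and derivative: "\<And>z. \<exists>D. (h z has_real_derivative D) (at 1 within {0..1}) \<and>
      \<gamma> / real k * D \<le> K1 * (1 + real z / real k)"
  shows "\<bar>transition_pgf n (g (exp (- lam / real k))) z - exp (- lam / real k) ^ z\<bar>
    \<le> (6 * L + 2 * K1 * (lam + 1)) / \<gamma>"
proof -
  define s where "s = exp (- lam / real k)"
  define a where "a = g s"
  define \<mu> where "\<mu> = real k * (1 - s)"
  have k: "0 < real k"
    using lam by linarith
  have s: "0 < s" "s \<le> 1" "1 - s \<le> lam / real k"
    using lam k exp_ge_add_one_self[of "- lam / real k"] by (auto simp: s_def)
  have a: "0 \<le> a" "a \<le> 1"
  proof -
    have "pgf M (xi n 1) s = a"
      using pgf_xi s by (simp add: a_def)
    moreover have "0 \<le> pgf M (xi n 1) s"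
      using s by (intro pgf_nonneg) simp
    moreover have "pgf M (xi n 1) s \<le> 1"
      using s by (intro pgf_le_1 xi_measurable) simp_all
    ultimately show "0 \<le> a" "a \<le> 1"
      by simp_all
  qed
  have "pgf M (xi 0 1) 1 = g 1"
    by (rule pgf_xi) simp_all
  then have g1: "g 1 = 1"
    by (simp add: pgf_1)
  have "\<bar>Rk g k \<gamma> \<mu> - Rk g k \<gamma> 0\<bar> \<le> L * \<mu>"
    using s k by (intro lipschitz) (auto simp: \<mu>_def field_simps)
  then have a_close: "\<bar>real k * \<gamma> * (a - exp (- lam / real k))\<bar> \<le> L * (real k * (1 - exp (- lam / real k)))"
    using k by (simp add: Rk_def g1 \<mu>_def a_def s_def)
  have psi_z: "(\<lambda>\<omega>. psi n \<omega> z) \<in> measurable M (count_space UNIV)"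
    using psi_measurable[of n] by measurable
  define H where "H = h z a"
  have H: "0 \<le> H" "H \<le> 1"
    using pgf_psi[OF a, of n z] pgf_nonneg[OF a(1), of "\<lambda>\<omega>. psi n \<omega> z"] pgf_le_1[OF psi_z a] by (auto simp: H_def)
  obtain D where D: "(h z has_real_derivative D) (at 1 within {0..1})"
    and D_bound: "\<gamma> / real k * D \<le> K1 * (1 + real z / real k)"
    using derivative by blast
  have "1 - H \<le> D * (1 - a)"
    unfolding H_def by (rule one_minus_pgf_le_derivative[OF psi_z _ D a]) (rule pgf_psi)
  then have "\<bar>a ^ z * H - exp (- lam / real k) ^ z\<bar> \<le> (6 * L + 2 * K1 * (lam + 1)) / \<gamma>"
    by (rule power_mul_defect_le[OF lam \<gamma> L K1 a a_close H _ D_bound])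
  then show ?thesis
    using pgf_psi[OF a, of n z] by (simp add: transition_pgf_def H_def a_def s_def)
qed

subsection \<open>Stopping indices\<close>

definition stopping_index :: "('a \<Rightarrow> nat) \<Rightarrow> bool" where
  "stopping_index \<sigma> \<longleftrightarrow> (\<forall>m. {\<omega> \<in> space M. \<sigma> \<omega> \<le> m} \<in> sets (past m))"

lemma stopping_index_eq_in_past:
  assumes \<sigma>: "stopping_index \<sigma>" and "j \<le> m"
  shows "{\<omega> \<in> space M. \<sigma> \<omega> = j} \<in> sets (past m)"
proof -
  have "{\<omega> \<in> space M. \<sigma> \<omega> = j} \<in> sets (past j)"
  proof (cases j)
    case 0
    then have "{\<omega> \<in> space M. \<sigma> \<omega> = j} = {\<omega> \<in> space M. \<sigma> \<omega> \<le> 0}"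
      by auto
    then show ?thesis
      using \<sigma> 0 unfolding stopping_index_def by metis
  next
    case (Suc i)
    have "{\<omega> \<in> space M. \<sigma> \<omega> \<le> i} \<in> sets (past j)"
      using \<sigma> past_mono[of i j] Suc unfolding stopping_index_def by auto
    moreover have "{\<omega> \<in> space M. \<sigma> \<omega> = j} = {\<omega> \<in> space M. \<sigma> \<omega> \<le> j} - {\<omega> \<in> space M. \<sigma> \<omega> \<le> i}"
      using Suc by auto
    ultimately show ?thesis
      using \<sigma> unfolding stopping_index_def by auto
  qed
  then show ?thesis
    using past_mono[OF \<open>j \<le> m\<close>] by auto
qed

lemma stopping_index_window_in_past:
  assumes "stopping_index \<sigma>" "stopping_index N"
  shows "{\<omega> \<in> space M. \<sigma> \<omega> \<le> m \<and> m < N \<omega>} \<in> sets (past m)"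
proof -
  have "{\<omega> \<in> space M. \<sigma> \<omega> \<le> m \<and> m < N \<omega>} = {\<omega> \<in> space M. \<sigma> \<omega> \<le> m} - {\<omega> \<in> space M. N \<omega> \<le> m}"
    by auto
  then show ?thesis
    using assms unfolding stopping_index_def by auto
qed

lemma window_start_measurable_past:
  fixes s :: real
  assumes \<sigma>: "stopping_index \<sigma>" and N: "stopping_index N"
  shows "(\<lambda>\<omega>. of_bool (\<sigma> \<omega> \<le> m \<and> m < N \<omega>) * s ^ Z (\<sigma> \<omega>) \<omega>) \<in> borel_measurable (past m)"
proof -
  let ?window = "{\<omega> \<in> space M. \<sigma> \<omega> \<le> m \<and> m < N \<omega>}"
  have "(\<lambda>\<omega>. indicator ?window \<omega> * (\<Sum>j\<le>m. indicator {\<omega> \<in> space M. \<sigma> \<omega> = j} \<omega> * s ^ Z j \<omega>))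
      \<in> borel_measurable (past m)"
    using stopping_index_window_in_past[OF \<sigma> N] stopping_index_eq_in_past[OF \<sigma>]
      Z_measurable_past[of _ m]
    by measurable
  moreover have "indicator ?window \<omega> * (\<Sum>j\<le>m. indicator {\<omega> \<in> space M. \<sigma> \<omega> = j} \<omega> * s ^ Z j \<omega>) =
      of_bool (\<sigma> \<omega> \<le> m \<and> m < N \<omega>) * s ^ Z (\<sigma> \<omega>) \<omega>" if "\<omega> \<in> space (past m)" for \<omega>
    using that by (auto simp: indicator_def if_distrib sum.delta cong: if_cong)
  ultimately show ?thesis
    by (rule measurable_cong[THEN iffD1, rotated])
qed

lemma abs_integral_window_increment_le:
  fixes s a \<epsilon> :: real and W :: "'a \<Rightarrow> real"
  assumes \<sigma>: "stopping_index \<sigma>" and N: "stopping_index N"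
    and s: "0 \<le> s" "s \<le> 1" and pgf_xi: "\<And>i. 1 \<le> i \<Longrightarrow> pgf M (xi m i) s = a"
    and defect: "\<And>z. \<bar>transition_pgf m a z - s ^ z\<bar> \<le> \<epsilon>"
    and W: "W \<in> borel_measurable (past m)" and W_window: "\<And>\<omega>. \<bar>W \<omega>\<bar> \<le> of_bool (\<sigma> \<omega> \<le> m \<and> m < N \<omega>)"
  shows "\<bar>\<integral>\<omega>. W \<omega> * (s ^ Z (Suc m) \<omega> - s ^ Z m \<omega>) \<partial>M\<bar>
    \<le> \<epsilon> * (\<integral>\<omega>. of_bool (\<sigma> \<omega> \<le> m \<and> m < N \<omega>) \<partial>M)"
proof -
  have W_bounded: "\<bar>W \<omega>\<bar> \<le> 1" for \<omega>
    by (rule order_trans[OF W_window]) simp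
  have "\<bar>\<integral>\<omega>. W \<omega> * (s ^ Z (Suc m) \<omega> - s ^ Z m \<omega>) \<partial>M\<bar> \<le> \<epsilon> * (\<integral>\<omega>. \<bar>W \<omega>\<bar> \<partial>M)"
    by (rule abs_integral_past_mul_increment_le[OF s _ defect W]) (use pgf_xi W_bounded in auto)
  also have "\<dots> \<le> \<epsilon> * (\<integral>\<omega>. of_bool (\<sigma> \<omega> \<le> m \<and> m < N \<omega>) \<partial>M)"
  proof (intro mult_left_mono integral_mono)
    show "integrable M (\<lambda>\<omega>. \<bar>W \<omega>\<bar>)"
      using W_bounded measurable_generated_M[OF W] by (intro integrable_const_bound[where B=1]) auto
    show "integrable M (\<lambda>\<omega>. of_bool (\<sigma> \<omega> \<le> m \<and> m < N \<omega>) :: real)"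
      using measurable_generated_M[OF window_start_measurable_past[OF \<sigma> N, of m 1]]
      by (intro integrable_const_bound[where B=1]) auto
    show "0 \<le> \<epsilon>"
      by (meson abs_ge_zero defect order_trans)
  qed (rule W_window)
  finally show ?thesis .
qed

lemma integral_window_length_le:
  fixes B :: real
  assumes \<sigma>: "stopping_index \<sigma>" and N: "stopping_index N"
    and order: "\<And>\<omega>. \<omega> \<in> space M \<Longrightarrow> \<sigma> \<omega> \<le> N \<omega> \<and> N \<omega> \<le> n0"
    and length: "\<And>\<omega>. \<omega> \<in> space M \<Longrightarrow> real (N \<omega>) - real (\<sigma> \<omega>) \<le> B"
  shows "(\<Sum>m<n0. \<integral>\<omega>. of_bool (\<sigma> \<omega> \<le> m \<and> m < N \<omega>) \<partial>M) \<le> B"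
proof -
  have I: "integrable M (\<lambda>\<omega>. of_bool (\<sigma> \<omega> \<le> m \<and> m < N \<omega>) :: real)" for m
    using measurable_generated_M[OF window_start_measurable_past[OF \<sigma> N, of m 1]]
    by (intro integrable_const_bound[where B=1]) auto
  have "(\<Sum>m<n0. \<integral>\<omega>. of_bool (\<sigma> \<omega> \<le> m \<and> m < N \<omega>) \<partial>M) =
      (\<integral>\<omega>. (\<Sum>m<n0. of_bool (\<sigma> \<omega> \<le> m \<and> m < N \<omega>)) \<partial>M :: real)"
    using I by (intro Bochner_Integration.integral_sum[symmetric]) auto
  also have "\<dots> \<le> (\<integral>\<omega>. B \<partial>M)"
  proof (rule integral_mono)
    show "integrable M (\<lambda>\<omega>. \<Sum>m<n0. of_bool (\<sigma> \<omega> \<le> m \<and> m < N \<omega>) :: real)"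
      using I by (rule Bochner_Integration.integrable_sum)
  next
    fix \<omega> assume \<omega>: "\<omega> \<in> space M"
    have "(\<Sum>m<n0. of_bool (\<sigma> \<omega> \<le> m \<and> m < N \<omega>) :: real) = real (N \<omega>) - real (\<sigma> \<omega>)"
      using sum_window_eq[of "N \<omega>" n0 "\<sigma> \<omega>" "\<lambda>_. 1"] order[OF \<omega>] by (simp add: of_nat_diff)
    then show "(\<Sum>m<n0. of_bool (\<sigma> \<omega> \<le> m \<and> m < N \<omega>)) \<le> B"
      using length[OF \<omega>] by simp
  qed simp
  finally show ?thesis
    by (simp add: prob_space)
qed

lemma expected_square_window_le:
  fixes s a1 a2 \<epsilon>1 \<epsilon>2 B :: real
  assumes s: "0 \<le> s" "s \<le> 1"
    and \<sigma>: "stopping_index \<sigma>" and N: "stopping_index N"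
    and order: "\<And>\<omega>. \<omega> \<in> space M \<Longrightarrow> \<sigma> \<omega> \<le> N \<omega> \<and> N \<omega> \<le> n0"
    and length: "\<And>\<omega>. \<omega> \<in> space M \<Longrightarrow> real (N \<omega>) - real (\<sigma> \<omega>) \<le> B"
    and pgf1: "\<And>n i. 1 \<le> i \<Longrightarrow> pgf M (xi n i) s = a1"
    and pgf2: "\<And>n i. 1 \<le> i \<Longrightarrow> pgf M (xi n i) (s\<^sup>2) = a2"
    and defect1: "\<And>n z. \<bar>transition_pgf n a1 z - s ^ z\<bar> \<le> \<epsilon>1"
    and defect2: "\<And>n z. \<bar>transition_pgf n a2 z - (s\<^sup>2) ^ z\<bar> \<le> \<epsilon>2"
  shows "(\<integral>\<omega>. (s ^ Z (N \<omega>) \<omega> - s ^ Z (\<sigma> \<omega>) \<omega>)\<^sup>2 \<partial>M) \<le> (\<epsilon>2 + 2 * \<epsilon>1) * B"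
proof -
  define I where "I m \<omega> = (of_bool (\<sigma> \<omega> \<le> m \<and> m < N \<omega>) :: real)" for m \<omega>
  define W where "W m \<omega> = I m \<omega> * s ^ Z (\<sigma> \<omega>) \<omega>" for m \<omega>
  define A where "A m \<omega> = I m \<omega> * ((s\<^sup>2) ^ Z (Suc m) \<omega> - (s\<^sup>2) ^ Z m \<omega>)" for m \<omega>
  define C where "C m \<omega> = W m \<omega> * (s ^ Z (Suc m) \<omega> - s ^ Z m \<omega>)" for m \<omega>
  have s2: "0 \<le> s\<^sup>2" "s\<^sup>2 \<le> 1"
    using s by (auto simp: power_le_one)
  have I_past: "I m \<in> borel_measurable (past m)" for m
    unfolding I_def using window_start_measurable_past[OF \<sigma> N, of m 1] by simp
  have W_past: "W m \<in> borel_measurable (past m)" for m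
    unfolding W_def I_def by (rule window_start_measurable_past[OF \<sigma> N])
  have window: "\<bar>I m \<omega>\<bar> \<le> I m \<omega>" "\<bar>W m \<omega>\<bar> \<le> I m \<omega>" "\<bar>I m \<omega>\<bar> \<le> 1" "\<bar>W m \<omega>\<bar> \<le> 1" for m \<omega>
    using s by (auto simp: W_def I_def abs_mult power_le_one)
  have int_A: "integrable M (A m)" for m
    unfolding A_def by (rule integrable_past_mul_increment[OF s2 I_past]) (rule window(3))
  have int_C: "integrable M (C m)" for m
    unfolding C_def by (rule integrable_past_mul_increment[OF s W_past]) (rule window(4))
  have A_le: "(\<integral>\<omega>. A m \<omega> \<partial>M) \<le> \<epsilon>2 * (\<integral>\<omega>. I m \<omega> \<partial>M)" for m
    using abs_integral_window_increment_le[OF \<sigma> N s2 pgf2 defect2 I_past] window(1)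
    unfolding A_def I_def by (simp add: abs_le_iff)
  have C_le: "- (\<integral>\<omega>. C m \<omega> \<partial>M) \<le> \<epsilon>1 * (\<integral>\<omega>. I m \<omega> \<partial>M)" for m
    using abs_integral_window_increment_le[OF \<sigma> N s pgf1 defect1 W_past] window(2)
    unfolding C_def I_def by (simp add: abs_le_iff)
  have "(\<integral>\<omega>. (s ^ Z (N \<omega>) \<omega> - s ^ Z (\<sigma> \<omega>) \<omega>)\<^sup>2 \<partial>M) =
      (\<integral>\<omega>. (\<Sum>m<n0. A m \<omega>) - 2 * (\<Sum>m<n0. C m \<omega>) \<partial>M)"
    using square_power_diff_window[of "\<sigma> _" "N _" n0 s "\<lambda>j. Z j _"] order
    by (intro Bochner_Integration.integral_cong) (auto simp: A_def C_def W_def I_def)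
  also have "\<dots> = (\<Sum>m<n0. \<integral>\<omega>. A m \<omega> \<partial>M) - 2 * (\<Sum>m<n0. \<integral>\<omega>. C m \<omega> \<partial>M)"
    using int_A int_C by simp
  also have "\<dots> \<le> (\<epsilon>2 + 2 * \<epsilon>1) * (\<Sum>m<n0. \<integral>\<omega>. I m \<omega> \<partial>M)"
  proof -
    have "(\<Sum>m<n0. \<integral>\<omega>. A m \<omega> \<partial>M) \<le> \<epsilon>2 * (\<Sum>m<n0. \<integral>\<omega>. I m \<omega> \<partial>M)"
      unfolding sum_distrib_left by (rule sum_mono) (rule A_le)
    moreover have "- (\<Sum>m<n0. \<integral>\<omega>. C m \<omega> \<partial>M) \<le> \<epsilon>1 * (\<Sum>m<n0. \<integral>\<omega>. I m \<omega> \<partial>M)"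
      unfolding sum_distrib_left sum_negf[symmetric] by (rule sum_mono) (rule C_le)
    ultimately show ?thesis
      by (simp add: distrib_right)
  qed
  also have "\<dots> \<le> (\<epsilon>2 + 2 * \<epsilon>1) * B"
    using integral_window_length_le[OF \<sigma> N order length] defect1[of 0 0] defect2[of 0 0]
    by (intro mult_left_mono) (auto simp: I_def)
  finally show ?thesis .
qed

lemma nat_filtration_subset_past:
  assumes \<gamma>: "0 < \<gamma>" and u: "\<gamma> * u < real m + 1"
  shows "sets (nat_filtration M (Yproc k \<gamma> Z) u) \<subseteq> sets (past m)"
proof -
  let ?G = "{Yproc k \<gamma> Z t -` A \<inter> space M | t A. 0 \<le> t \<and> t \<le> u \<and> A \<in> sets borel}"
  have "?G \<subseteq> sets (past m)"
  proof
    fix x assume "x \<in> ?G"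
    then obtain t A where x: "x = Yproc k \<gamma> Z t -` A \<inter> space M"
      and t: "0 \<le> t" "t \<le> u" and A: "A \<in> sets borel"
      by auto
    have "\<gamma> * t < real m + 1"
      using mult_left_mono[OF t(2), of \<gamma>] \<gamma> u by linarith
    then have "Z (nat \<lfloor>\<gamma> * t\<rfloor>) \<in> measurable (past m) (count_space UNIV)"
      by (intro Z_measurable_past) (simp add: nat_floor_le_iff)
    then have "Yproc k \<gamma> Z t \<in> borel_measurable (past m)"
      unfolding Yproc_def[abs_def] by measurable
    from measurable_sets[OF this A] show "x \<in> sets (past m)"
      by (simp add: x)
  qed
  moreover have "sets (nat_filtration M (Yproc k \<gamma> Z) u) = sigma_sets (space M) ?G"
    unfolding nat_filtration_def by (intro sets_measure_of) auto
  ultimately show ?thesis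
    using sets.sigma_sets_subset[of ?G "past m"] by simp
qed

lemma stopping_time_less_in_past:
  assumes \<gamma>: "0 < \<gamma>" and \<tau>: "stopping_time (nat_filtration M (Yproc k \<gamma> Z)) \<tau>"
    and t: "\<gamma> * t \<le> real m + 1"
  shows "{\<omega> \<in> space M. \<tau> \<omega> < t} \<in> sets (past m)"
proof -
  have "{\<omega> \<in> space M. \<tau> \<omega> \<le> t - 1 / Suc r} \<in> sets (past m)" for r
  proof -
    let ?u = "t - 1 / Suc r"
    have "{\<omega> \<in> space (nat_filtration M (Yproc k \<gamma> Z) ?u). \<tau> \<omega> \<le> ?u}
        \<in> sets (nat_filtration M (Yproc k \<gamma> Z) ?u)"
      using stopping_timeD[OF \<tau>, of ?u] by (simp add: pred_def)
    moreover have "space (nat_filtration M (Yproc k \<gamma> Z) ?u) = space M"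
      unfolding nat_filtration_def by (intro space_measure_of) auto
    moreover have "\<gamma> * ?u < real m + 1"
    proof -
      have "\<gamma> * ?u = \<gamma> * t - \<gamma> / Suc r"
        by (simp add: right_diff_distrib)
      moreover have "0 < \<gamma> / Suc r"
        using \<gamma> by simp
      ultimately show ?thesis
        using t by linarith
    qed
    ultimately show ?thesis
      using nat_filtration_subset_past[OF \<gamma>, of ?u m k] by auto
  qed
  then have "(\<Union>r. {\<omega> \<in> space M. \<tau> \<omega> \<le> t - 1 / Suc r}) \<in> sets (past m)"
    by (intro sets.countable_UN) auto
  moreover have "{\<omega> \<in> space M. \<tau> \<omega> < t} = (\<Union>r. {\<omega> \<in> space M. \<tau> \<omega> \<le> t - 1 / Suc r})"
  proof safe
    fix \<omega> assume "\<omega> \<in> space M" "\<tau> \<omega> < t"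
    then obtain r where "1 / Suc r < t - \<tau> \<omega>"
      using reals_Archimedean[of "t - \<tau> \<omega>"] by (auto simp: inverse_eq_divide)
    then show "\<omega> \<in> (\<Union>r. {\<omega> \<in> space M. \<tau> \<omega> \<le> t - 1 / Suc r})"
      using \<open>\<omega> \<in> space M\<close> by (intro UN_I[of r]) auto
  next
    fix \<omega> r assume "\<tau> \<omega> \<le> t - 1 / Suc r"
    moreover have "0 < 1 / real (Suc r)"
      by simp
    ultimately show "\<tau> \<omega> < t"
      by linarith
  qed
  ultimately show ?thesis
    by simp
qed

lemma stopping_index_floor:
  assumes \<gamma>: "0 < \<gamma>" and \<tau>: "stopping_time (nat_filtration M (Yproc k \<gamma> Z)) \<tau>" and c: "0 \<le> c"
  shows "stopping_index (\<lambda>\<omega>. nat \<lfloor>\<gamma> * (\<tau> \<omega> + c)\<rfloor>)"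
  unfolding stopping_index_def
proof
  fix m
  have "{\<omega> \<in> space M. nat \<lfloor>\<gamma> * (\<tau> \<omega> + c)\<rfloor> \<le> m} = {\<omega> \<in> space M. \<tau> \<omega> < (real m + 1) / \<gamma> - c}"
    using \<gamma> by (auto simp: nat_floor_le_iff field_simps)
  moreover have "{\<omega> \<in> space M. \<tau> \<omega> < (real m + 1) / \<gamma> - c} \<in> sets (past m)"
    using \<gamma> c by (intro stopping_time_less_in_past[OF \<gamma> \<tau>]) (simp add: right_diff_distrib)
  ultimately show "{\<omega> \<in> space M. nat \<lfloor>\<gamma> * (\<tau> \<omega> + c)\<rfloor> \<le> m} \<in> sets (past m)"
    by simp
qed

lemma expected_square_increment_le:
  fixes \<gamma> \<delta> T s a1 a2 \<epsilon>1 \<epsilon>2 :: real and k :: nat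
  assumes \<gamma>: "0 < \<gamma>" and \<delta>: "0 \<le> \<delta>"
    and \<tau>: "stopping_time (nat_filtration M (Yproc k \<gamma> Z)) \<tau>"
    and \<tau>_bounds: "\<And>\<omega>. \<omega> \<in> space M \<Longrightarrow> 0 \<le> \<tau> \<omega> \<and> \<tau> \<omega> + \<delta> \<le> T"
    and s: "0 \<le> s" "s \<le> 1"
    and pgf1: "\<And>n i. 1 \<le> i \<Longrightarrow> pgf M (xi n i) s = a1"
    and pgf2: "\<And>n i. 1 \<le> i \<Longrightarrow> pgf M (xi n i) (s\<^sup>2) = a2"
    and defect1: "\<And>n z. \<bar>transition_pgf n a1 z - s ^ z\<bar> \<le> \<epsilon>1"
    and defect2: "\<And>n z. \<bar>transition_pgf n a2 z - (s\<^sup>2) ^ z\<bar> \<le> \<epsilon>2"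
  shows "(\<integral>\<omega>. (s ^ Z (nat \<lfloor>\<gamma> * (\<tau> \<omega> + \<delta>)\<rfloor>) \<omega> - s ^ Z (nat \<lfloor>\<gamma> * \<tau> \<omega>\<rfloor>) \<omega>)\<^sup>2 \<partial>M)
      \<le> (\<epsilon>2 + 2 * \<epsilon>1) * (\<gamma> * \<delta> + 1)"
proof (rule expected_square_window_le[OF s _ stopping_index_floor[OF \<gamma> \<tau> \<delta>] _ _ pgf1 pgf2 defect1 defect2])
  show "stopping_index (\<lambda>\<omega>. nat \<lfloor>\<gamma> * \<tau> \<omega>\<rfloor>)"
    using stopping_index_floor[OF \<gamma> \<tau>, of 0] by simp
  fix \<omega> assume \<omega>: "\<omega> \<in> space M"
  then have "\<gamma> * \<tau> \<omega> \<le> \<gamma> * (\<tau> \<omega> + \<delta>)" "\<gamma> * (\<tau> \<omega> + \<delta>) \<le> \<gamma> * T" "0 \<le> \<gamma> * \<tau> \<omega>"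
    using \<tau>_bounds[OF \<omega>] \<gamma> \<delta> by auto
  then show "nat \<lfloor>\<gamma> * \<tau> \<omega>\<rfloor> \<le> nat \<lfloor>\<gamma> * (\<tau> \<omega> + \<delta>)\<rfloor> \<and> nat \<lfloor>\<gamma> * (\<tau> \<omega> + \<delta>)\<rfloor> \<le> nat \<lfloor>\<gamma> * T\<rfloor>"
    by (auto intro: nat_mono floor_mono)
  show "real (nat \<lfloor>\<gamma> * (\<tau> \<omega> + \<delta>)\<rfloor>) - real (nat \<lfloor>\<gamma> * \<tau> \<omega>\<rfloor>) \<le> \<gamma> * \<delta> + 1"
    using nat_floor_add_diff_le[OF \<open>0 \<le> \<gamma> * \<tau> \<omega>\<close>, of "\<gamma> * \<delta>"] \<gamma> \<delta> by (simp add: distrib_left)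
qed

lemma expected_rho_square_le:
  fixes g :: "real \<Rightarrow> real" and h :: "nat \<Rightarrow> real \<Rightarrow> real" and k :: nat and \<gamma> \<delta> T lam L K1 :: real
  assumes k: "2 * lam \<le> real k" and lam: "0 < lam" and \<gamma>: "0 < \<gamma>" "4 * L \<le> \<gamma>"
    and K1: "0 \<le> K1" and \<delta>: "0 \<le> \<delta>"
    and \<tau>: "stopping_time (nat_filtration M (Yproc k \<gamma> Z)) \<tau>"
    and \<tau>_bounds: "\<And>\<omega>. \<omega> \<in> space M \<Longrightarrow> 0 \<le> \<tau> \<omega> \<and> \<tau> \<omega> + \<delta> \<le> T"
    and pgf_xi: "\<And>n i s. 1 \<le> i \<Longrightarrow> 0 \<le> s \<Longrightarrow> s \<le> 1 \<Longrightarrow> pgf M (xi n i) s = g s"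
    and pgf_psi: "\<And>n z s. 0 \<le> s \<Longrightarrow> s \<le> 1 \<Longrightarrow> pgf M (\<lambda>\<omega>. psi n \<omega> z) s = h z s"
    and lipschitz: "\<And>l1 l2. 0 \<le> l1 \<and> l1 \<le> min (2 * lam) (real k) \<and> 0 \<le> l2 \<and> l2 \<le> min (2 * lam) (real k) \<Longrightarrow>
      \<bar>Rk g k \<gamma> l1 - Rk g k \<gamma> l2\<bar> \<le> L * \<bar>l1 - l2\<bar>"
    and derivative: "\<And>x. 0 \<le> x \<Longrightarrow> \<exists>D. (h (nat \<lfloor>real k * x\<rfloor>) has_real_derivative D) (at 1 within {0..1}) \<and>
      \<gamma> / real k * D \<le> K1 * (1 + x)"
  shows "(\<integral>\<omega>. (rho lam (Yproc k \<gamma> Z (\<tau> \<omega> + \<delta>) \<omega>) (Yproc k \<gamma> Z (\<tau> \<omega>) \<omega>))\<^sup>2 \<partial>M)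
    \<le> (18 * L + K1 * (8 * lam + 6)) * (\<delta> + 1 / \<gamma>)"
proof -
  define s where "s = exp (- lam / real k)"
  define C1 where "C1 = 6 * L + 2 * K1 * (lam + 1)"
  define C2 where "C2 = 6 * L + 2 * K1 * (2 * lam + 1)"
  have k0: "0 < real k"
    using lam k by linarith
  have "\<bar>Rk g k \<gamma> (2 * lam) - Rk g k \<gamma> 0\<bar> \<le> L * \<bar>2 * lam - 0\<bar>"
    using k lam by (intro lipschitz) auto
  then have "0 \<le> L * (2 * lam)"
    using lam by (simp add: order_trans[OF abs_ge_zero])
  then have L: "0 \<le> L"
    using lam by (simp add: zero_le_mult_iff)
  have lipschitz0: "\<bar>Rk g k \<gamma> \<mu> - Rk g k \<gamma> 0\<bar> \<le> L * \<mu>" if "0 \<le> \<mu>" "\<mu> \<le> 2 * lam" "\<mu> \<le> real k" for \<mu>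
    using lipschitz[of \<mu> 0] that lam by simp
  have derivative_at: "\<exists>D. (h z has_real_derivative D) (at 1 within {0..1}) \<and>
      \<gamma> / real k * D \<le> K1 * (1 + real z / real k)" for z
    using derivative[of "real z / real k"] k0 by simp
  have s: "0 \<le> s" "s \<le> 1"
    using lam k0 by (auto simp: s_def)
  have s2: "0 \<le> s\<^sup>2" "s\<^sup>2 \<le> 1" "s\<^sup>2 = exp (- (2 * lam) / real k)"
    using s by (auto simp: s_def power_le_one power2_eq_square exp_add[symmetric])
  have "(\<integral>\<omega>. (rho lam (Yproc k \<gamma> Z (\<tau> \<omega> + \<delta>) \<omega>) (Yproc k \<gamma> Z (\<tau> \<omega>) \<omega>))\<^sup>2 \<partial>M) =
      (\<integral>\<omega>. (s ^ Z (nat \<lfloor>\<gamma> * (\<tau> \<omega> + \<delta>)\<rfloor>) \<omega> - s ^ Z (nat \<lfloor>\<gamma> * \<tau> \<omega>\<rfloor>) \<omega>)\<^sup>2 \<partial>M)"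
    by (simp add: rho_Yproc s_def)
  also have "\<dots> \<le> (C2 / \<gamma> + 2 * (C1 / \<gamma>)) * (\<gamma> * \<delta> + 1)"
  proof (rule expected_square_increment_le[OF \<gamma>(1) \<delta> \<tau> \<tau>_bounds s])
    show "pgf M (xi n i) s = g s" "pgf M (xi n i) (s\<^sup>2) = g (s\<^sup>2)" if "1 \<le> i" for n i
      using pgf_xi[OF that s] pgf_xi[OF that s2(1,2)] by simp_all
    show "\<bar>transition_pgf n (g s) z - s ^ z\<bar> \<le> C1 / \<gamma>" for n z
      unfolding s_def C1_def using k lam
      by (intro transition_pgf_defect_le[OF _ _ \<gamma> L K1 pgf_xi pgf_psi _ derivative_at] lipschitz0) auto
    show "\<bar>transition_pgf n (g (s\<^sup>2)) z - (s\<^sup>2) ^ z\<bar> \<le> C2 / \<gamma>" for n z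
      unfolding s2(3) C2_def using k lam
      by (intro transition_pgf_defect_le[OF _ _ \<gamma> L K1 pgf_xi pgf_psi _ derivative_at] lipschitz0) auto
  qed
  also have "\<dots> = (C2 + 2 * C1) * (\<delta> + 1 / \<gamma>)"
    using \<gamma> by (simp add: field_simps)
  also have "C2 + 2 * C1 = 18 * L + K1 * (8 * lam + 6)"
    by (simp add: C1_def C2_def algebra_simps)
  finally show ?thesis .
qed

end

text \<open>Of the hypotheses only the Lipschitz bound in (A) on \<open>[0, 2\<lambda>]\<close> and condition (C) enter the
  estimate; the convergence parts of (A) and (B), the coefficients of the limit equation, the
  monotonicity of \<open>\<gamma>\<close> and the identical distribution of the immigration functions are not needed.\<close>

theorem lemma3p3:
  fixes M :: "nat \<Rightarrow> 'a measure"
    and xi :: "nat \<Rightarrow> nat \<Rightarrow> nat \<Rightarrow> 'a \<Rightarrow> nat"          \<comment> \<open>xi k n i\<close>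
    and psi :: "nat \<Rightarrow> nat \<Rightarrow> 'a \<Rightarrow> nat \<Rightarrow> nat"         \<comment> \<open>psi k n \<omega> i\<close>
    and Z0 :: "nat \<Rightarrow> 'a \<Rightarrow> nat"
    and g :: "nat \<Rightarrow> real \<Rightarrow> real"
    and h :: "nat \<Rightarrow> nat \<Rightarrow> real \<Rightarrow> real"                \<comment> \<open>h k i = h_k^(i)\<close>
    and \<gamma> :: "nat \<Rightarrow> real"
    and b c K :: real
    and m \<pi> :: "real measure"
    and \<beta> :: "real \<Rightarrow> real"
    and q :: "real \<Rightarrow> real \<Rightarrow> real"
    and r :: "real \<Rightarrow> real"
    and T :: real
    and \<delta> :: "nat \<Rightarrow> real"
    and \<tau> :: "nat \<Rightarrow> 'a \<Rightarrow> real"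
    and lam :: real
  defines "PS \<equiv> PiM (UNIV :: nat set) (\<lambda>_. count_space (UNIV :: nat set))"
  defines "Z \<equiv> (\<lambda>k. Zproc (xi k) (psi k) (Z0 k))"
  defines "Y \<equiv> (\<lambda>k t \<omega>. Yproc k (\<gamma> k) (Z k) t \<omega>)"
  assumes prob: "\<And>k. 1 \<le> k \<Longrightarrow> prob_space (M k)"
    and xi_meas: "\<And>k n i. 1 \<le> k \<Longrightarrow> xi k n i \<in> measurable (M k) (count_space UNIV)"
    and psi_meas: "\<And>k n. 1 \<le> k \<Longrightarrow> psi k n \<in> measurable (M k) PS"
    and Z0_meas: "\<And>k. 1 \<le> k \<Longrightarrow> Z0 k \<in> measurable (M k) (count_space UNIV)"
    and indep: "\<And>k. 1 \<le> k \<Longrightarrow> prob_space.indep_sets (M k)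
        (\<lambda>j. case j of
               Off n i \<Rightarrow> {xi k n i -` A \<inter> space (M k) | A. True}
             | Imm n \<Rightarrow> {psi k n -` A \<inter> space (M k) | A. A \<in> sets PS}
             | Init \<Rightarrow> {Z0 k -` A \<inter> space (M k) | A. True})
        ({Off n i | n i. 1 \<le> i} \<union> range Imm \<union> {Init})"
    and xi_pgf: "\<And>k n i s. 1 \<le> k \<Longrightarrow> 1 \<le> i \<Longrightarrow> 0 \<le> s \<Longrightarrow> s \<le> 1 \<Longrightarrow>
        pgf (M k) (xi k n i) s = g k s"
    and psi_ident: "\<And>k n. 1 \<le> k \<Longrightarrow> distr (M k) PS (psi k n) = distr (M k) PS (psi k 0)"
    and psi_pgf: "\<And>k n i s. 1 \<le> k \<Longrightarrow> 0 \<le> s \<Longrightarrow> s \<le> 1 \<Longrightarrow>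
        pgf (M k) (\<lambda>\<omega>. psi k n \<omega> i) s = h k i s"
    and \<gamma>_pos: "\<And>k. 0 < \<gamma> k"
    and \<gamma>_mono: "mono \<gamma>"
    and \<gamma>_lim: "filterlim \<gamma> at_top sequentially"
    \<comment> \<open>parameters\<close>
    and c_nonneg: "0 \<le> c"
    and m_sets: "sets m = sets borel" and m_supp: "emeasure m {..0} = 0"
    and m_int: "(\<integral>\<^sup>+ z. ennreal (min z (z^2)) \<partial>m) < \<infinity>"
    and \<pi>_sf: "sigma_finite_measure \<pi>"
    and \<pi>_sets: "sets \<pi> = sets borel" and \<pi>_supp: "emeasure \<pi> {..0} = 0"
    and \<beta>_meas: "\<beta> \<in> borel_measurable borel" and \<beta>_nonneg: "\<And>x. 0 \<le> \<beta> x"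
    and q_meas: "(\<lambda>(x, z). q x z) \<in> borel_measurable borel"
    and q_nonneg: "\<And>x z. 0 \<le> q x z"
    and S1: "\<And>x. 0 \<le> x \<Longrightarrow>
        ennreal \<bar>\<beta> x\<bar> + (\<integral>\<^sup>+ z. ennreal (q x z * z) \<partial>\<pi>) \<le> ennreal (K * (1 + x))"
    and S2: "\<And>x y. 0 \<le> x \<Longrightarrow> 0 \<le> y \<Longrightarrow>
        ennreal \<bar>\<beta> x - \<beta> y\<bar> + (\<integral>\<^sup>+ z. ennreal (\<bar>q x z - q y z\<bar> * z) \<partial>\<pi>)
          \<le> ennreal (r \<bar>x - y\<bar>)"
    and r_nonneg: "\<And>x. 0 \<le> x \<Longrightarrow> 0 \<le> r x"
    and r_mono: "mono_on {0..} r"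
    and r_concave: "concave_on {0..} r"
    and r_int: "\<And>\<epsilon>. 0 < \<epsilon> \<Longrightarrow>
        (\<integral>\<^sup>+ z \<in> {0<..\<epsilon>}. inverse (ennreal (r z)) \<partial>lborel) = \<infinity>"
    \<comment> \<open>condition (A)\<close>
    and A_lip: "\<And>a. 0 < a \<Longrightarrow> \<exists>L. \<forall>k\<ge>1. \<forall>l1 l2.
        0 \<le> l1 \<and> l1 \<le> min a (real k) \<and> 0 \<le> l2 \<and> l2 \<le> min a (real k) \<longrightarrow>
        \<bar>Rk (g k) k (\<gamma> k) l1 - Rk (g k) k (\<gamma> k) l2\<bar> \<le> L * \<bar>l1 - l2\<bar>"
    and A_lim: "\<And>l. 0 \<le> l \<Longrightarrow> (\<lambda>k. Rk (g k) k (\<gamma> k) l) \<longlonglongrightarrow> Rfun b c m l"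
    \<comment> \<open>condition (B)\<close>
    and B: "\<And>a1 a2 \<epsilon>. 0 < a1 \<Longrightarrow> 0 < a2 \<Longrightarrow> 0 < \<epsilon> \<Longrightarrow>
        eventually (\<lambda>k. \<forall>l\<in>{0..a1}. \<forall>x\<in>{0..a2}.
          \<bar>Fk (h k) k (\<gamma> k) l x - Ffun \<beta> q \<pi> l x\<bar> < \<epsilon>) sequentially"
    \<comment> \<open>condition (C)\<close>
    and C: "\<exists>K1>0. \<forall>x\<ge>0. \<forall>k\<ge>1. \<exists>D.
        (h k (nat \<lfloor>real k * x\<rfloor>) has_real_derivative D) (at 1 within {0..1}) \<and>
        \<gamma> k / real k * D \<le> K1 * (1 + x)"
    \<comment> \<open>the stopping times\<close>
    and T_pos: "0 < T"
    and \<delta>_pos: "\<And>k. 0 < \<delta> k"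
    and \<delta>_lim: "\<delta> \<longlonglongrightarrow> 0"
    and \<tau>_stop: "\<And>k. 1 \<le> k \<Longrightarrow> stopping_time (nat_filtration (M k) (Y k)) (\<tau> k)"
    and \<tau>_bounds: "\<And>k \<omega>. 1 \<le> k \<Longrightarrow> \<omega> \<in> space (M k) \<Longrightarrow>
        0 \<le> \<tau> k \<omega> \<and> \<tau> k \<omega> < \<tau> k \<omega> + \<delta> k \<and> \<tau> k \<omega> + \<delta> k \<le> T"
    and lam_pos: "0 < lam"
  shows "(\<lambda>k. \<integral>\<omega>. (rho lam (Y k (\<tau> k \<omega> + \<delta> k) \<omega>) (Y k (\<tau> k \<omega>) \<omega>))^2 \<partial>M k)
           \<longlonglongrightarrow> 0"
proof -
  obtain K1 where K1: "0 < K1" and derivative: "\<And>x k. 0 \<le> x \<Longrightarrow> 1 \<le> k \<Longrightarrow> \<exists>D.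
      (h k (nat \<lfloor>real k * x\<rfloor>) has_real_derivative D) (at 1 within {0..1}) \<and> \<gamma> k / real k * D \<le> K1 * (1 + x)"
    using C by blast
  obtain L where lipschitz: "\<And>k l1 l2. 1 \<le> k \<Longrightarrow>
      0 \<le> l1 \<and> l1 \<le> min (2 * lam) (real k) \<and> 0 \<le> l2 \<and> l2 \<le> min (2 * lam) (real k) \<Longrightarrow>
      \<bar>Rk (g k) k (\<gamma> k) l1 - Rk (g k) k (\<gamma> k) l2\<bar> \<le> L * \<bar>l1 - l2\<bar>"
    using A_lip[of "2 * lam"] lam_pos by auto
  define C0 where "C0 = 18 * L + K1 * (8 * lam + 6)"
  have bound: "(\<integral>\<omega>. (rho lam (Y k (\<tau> k \<omega> + \<delta> k) \<omega>) (Y k (\<tau> k \<omega>) \<omega>))\<^sup>2 \<partial>M k) \<le> C0 * (\<delta> k + 1 / \<gamma> k)"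
    if k: "1 \<le> k" "2 * lam \<le> real k" "4 * L \<le> \<gamma> k" for k
  proof -
    interpret branching_immigration "M k" "xi k" "psi k" "Z0 k"
      using prob[OF k(1)] xi_meas[OF k(1)] psi_meas[OF k(1)] Z0_meas[OF k(1)] indep[OF k(1)]
      unfolding branching_immigration_def branching_immigration_axioms_def PS_def
        driving_events_def[abs_def] driving_sources_def
      by blast
    show ?thesis
      unfolding Y_def Z_def C0_def
    proof (rule expected_rho_square_le[OF k(2) lam_pos \<gamma>_pos k(3) less_imp_le[OF K1] less_imp_le[OF \<delta>_pos]])
      show "stopping_time (nat_filtration (M k) (Yproc k (\<gamma> k) (Zproc (xi k) (psi k) (Z0 k)))) (\<tau> k)"
        using \<tau>_stop[OF k(1)] unfolding Y_def Z_def .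
      show "0 \<le> \<tau> k \<omega> \<and> \<tau> k \<omega> + \<delta> k \<le> T" if "\<omega> \<in> space (M k)" for \<omega>
        using \<tau>_bounds[OF k(1) that] by simp
      show "pgf (M k) (xi k n i) s = g k s" if "1 \<le> i" "0 \<le> s" "s \<le> 1" for n i s
        using xi_pgf[OF k(1) that] .
      show "pgf (M k) (\<lambda>\<omega>. psi k n \<omega> z) s = h k z s" if "0 \<le> s" "s \<le> 1" for n z s
        using psi_pgf[OF k(1) that] .
    qed (use lipschitz[OF k(1)] derivative[OF _ k(1)] in auto)
  qed
  have "eventually (\<lambda>k. 1 \<le> k \<and> 2 * lam \<le> real k \<and> 4 * L \<le> \<gamma> k) sequentially"
    using eventually_ge_at_top[of "max 1 (nat \<lceil>2 * lam\<rceil>)"] \<gamma>_lim[unfolded filterlim_at_top, rule_format, of "4 * L"]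
    by eventually_elim (use real_nat_ceiling_ge[of "2 * lam"] in linarith)
  then have "eventually (\<lambda>k. (\<integral>\<omega>. (rho lam (Y k (\<tau> k \<omega> + \<delta> k) \<omega>) (Y k (\<tau> k \<omega>) \<omega>))\<^sup>2 \<partial>M k)
      \<le> C0 * (\<delta> k + 1 / \<gamma> k)) sequentially"
    by eventually_elim (simp add: bound)
  then show ?thesis
  proof (rule tendsto_zero_if_le_vanishing[OF _ _ \<delta>_lim \<gamma>_lim])
    show "0 \<le> (\<integral>\<omega>. (rho lam (Y k (\<tau> k \<omega> + \<delta> k) \<omega>) (Y k (\<tau> k \<omega>) \<omega>))\<^sup>2 \<partial>M k)" for k
      by (intro integral_nonneg_AE) simp
  qed
qed

end
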